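(* Assume $\langle f\rangle_X=0$ and that $\psi$ satisfies (A1) and (A2). Let $u^0$ be the solution of the homogenized problem and $u^H$ the solution of the HQC problem. Then there exist constants $C_4,C_5$, depending only on $c_\psi,C_\psi,C'_\psi$ and $p$ (independent of $\epsilon$, $H$ and $f$), such that \[ |u^H-u^0|_{H^1}\le C_4 H\|f\|_{L^2},\qquad \|u^H-u^0\|_{L^2}\le C_5H^2\|f\|_{L^2}+\|e_{\rm mod}\|_{L^2}. \]
   Context: Let $\epsilon>0$, $N,p$ positive integers with normalization $N\epsilon=1$; $X_i=\epsilon i$, $Y_j=j$. $U^N_{\rm per}(\epsilon\mathbb Z)$: functions $u:\epsilon\mathbb Z\to\mathbb R$ with $u(X_{i+N})=u(X_i)$; $U^N_\#(\epsilon\mathbb Z)$: those with $\langle u\rangle_X:=\frac1N\sum_{i=1}^Nu(X_i)=0$. $\langle u,v\rangle_X=\frac1N\sum_{i=1}^Nu(X_i)v(X_i)$, $Du(X_i)=(u(X_{i+1})-u(X_i))/\epsilon$, $\|u\|_{L^2}=\langle u,u\rangle_X^{1/2}$, $|u|_{H^1}=\|Du\|_{L^2}$. $U^p_\#(\epsilon\mathbb Z)$: $p$-periodic functions on $\epsilon\mathbb Z$ with $\sum_{i=1}^p w(X_i)=0$. Two-scale functions $g:\epsilon\mathbb Z\times\mathbb Z\to\mathbb R$ satisfy $g(X_{i+N},Y_j)=g(X_i,Y_j)=g(X_i,Y_{j+p})$; $D_Xg(X_i,Y_j)=(g(X_{i+1},Y_j)-g(X_i,Y_j))/\epsilon$,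 $\langle g\rangle_Y(X_i)=\frac1p\sum_{j=1}^pg(X_i,Y_j)$, $\|g\|_{L^\infty(N,p)}=\max_{1\le i\le N,1\le j\le p}|g|$. $\psi$ is a two-scale function with (A1) $0<c_\psi\le\psi\le C_\psi$ and (A2) $\|D_X\psi\|_{L^\infty(N,p)}\le C'_\psi$. $\psi^0(X_i)=\langle1/\psi(X_i,\cdot)\rangle_Y^{-1}$. $f\in U^N_{\rm per}(\epsilon\mathbb Z)$. Homogenized problem: $u^0\in U^N_\#(\epsilon\mathbb Z)$ with $\langle\psi^0Du^0,Dv\rangle_X=\langle f,v\rangle_X$ for all $v\in U^N_{\rm per}(\epsilon\mathbb Z)$. HQC method: fix indices $1=i_1<i_2<\dots<i_K\le N$, set $i_{K+1}=N+1$, elements $S_k=\{X_i:i_k\le i<i_{k+1}\}$, $H_k=\epsilon(i_{k+1}-i_k)$, $H=\max_kH_k$. $U^H_{\rm per}$ is the set of $v\in U^N_{\rm per}(\epsilon\mathbb Z)$ that are affine in $X_i$ on each $\{X_i: i_k\le i\le i_{k+1}\}$, and $U^H_\#=U^H_{\rm per}\cap U^N_\#(\epsilon\mathbb Z)$. In each $S_k$ choose a sampling domain $S_k^{\rm rep}=\{X_i: i_k^{\rm rep}\le i<i_k^{\rm rep}+p\}\subset S_k$ and a collocation index $i_k^{\rm coll}$ with $X_{i_k^{\rm coll}}\in S_k^{\rm rep}$; let $\psi^\epsilon_{{\rm coll},k}(X_i)=\psi(X_{i_k^{\rm coll}},X_i/\epsilon)$ and $\langle a,b\rangle_{S_k^{\rm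 rep}}=\frac1p\sum_{X_i\in S_k^{\rm rep}}a(X_i)b(X_i)$. For $v^H\in U^H_{\rm per}$ let $\ell_k$ be the affine function on $\epsilon\mathbb Z$ coinciding with $v^H$ on $S_k$; the reconstruction is $\mathcal R_k(v^H)=\ell_k+w$, where $w\in U^p_\#(\epsilon\mathbb Z)$ satisfies $\langle\psi^\epsilon_{{\rm coll},k}D(\ell_k+w),Ds\rangle_{S_k^{\rm rep}}=0$ for all $s\in U^p_\#(\epsilon\mathbb Z)$. The HQC problem: find $u^H\in U^H_\#$ with $\sum_{k=1}^KH_k\langle\psi^\epsilon_{{\rm coll},k}D\mathcal R_k(u^H),D\mathcal R_k(v^H)\rangle_{S_k^{\rm rep}}=\langle f,v^H\rangle_X$ for all $v^H\in U^H_\#$. Modeling error: $e_{\rm mod}=u^H-\tilde u^H$, where $\tilde u^H\in U^H_\#$ solves $\langle\psi^0D\tilde u^H,Dv^H\rangle_X=\langle f,v^H\rangle_X$ for all $v^H\in U^H_\#$. *)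

theory Defs
  imports Complex_Main
begin

text \<open>Grid functions on eps*Z are represented as functions int => real, u i = u(X_i),
  X_i = eps*i, eps = 1/N.  Two-scale functions as int => int => real, g i j = g(X_i,Y_j), Y_j = j.\<close>

definition eps :: "nat \<Rightarrow> real" where
  "eps N = 1 / real N"

definition Xpt :: "nat \<Rightarrow> int \<Rightarrow> real" where
  "Xpt N i = eps N * real_of_int i"

definition Dd :: "nat \<Rightarrow> (int \<Rightarrow> real) \<Rightarrow> int \<Rightarrow> real" where
  "Dd N u = (\<lambda>i. (u (i + 1) - u i) / eps N)"

definition DX :: "nat \<Rightarrow> (int \<Rightarrow> int \<Rightarrow> real) \<Rightarrow> int \<Rightarrow> int \<Rightarrow> real" where
  "DX N g = (\<lambda>i j. (g (i + 1) j - g i j) / eps N)"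

definition avgX :: "nat \<Rightarrow> (int \<Rightarrow> real) \<Rightarrow> real" where
  "avgX N u = (1 / real N) * (\<Sum>i\<in>{1..int N}. u i)"

definition ipX :: "nat \<Rightarrow> (int \<Rightarrow> real) \<Rightarrow> (int \<Rightarrow> real) \<Rightarrow> real" where
  "ipX N u v = (1 / real N) * (\<Sum>i\<in>{1..int N}. u i * v i)"

definition L2 :: "nat \<Rightarrow> (int \<Rightarrow> real) \<Rightarrow> real" where
  "L2 N u = sqrt (ipX N u u)"

definition H1semi :: "nat \<Rightarrow> (int \<Rightarrow> real) \<Rightarrow> real" where
  "H1semi N u = L2 N (Dd N u)"

definition Linf2 :: "nat \<Rightarrow> nat \<Rightarrow> (int \<Rightarrow> int \<Rightarrow> real) \<Rightarrow> real" where
  "Linf2 N p g = Max {\<bar>g i j\<bar> | i j. i \<in> {1..int N} \<and> j \<in> {1..int p}}"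

definition Uper :: "nat \<Rightarrow> (int \<Rightarrow> real) set" where
  "Uper N = {u. \<forall>i. u (i + int N) = u i}"

definition Usharp :: "nat \<Rightarrow> (int \<Rightarrow> real) set" where
  "Usharp N = {u \<in> Uper N. avgX N u = 0}"

definition Upsharp :: "nat \<Rightarrow> (int \<Rightarrow> real) set" where
  "Upsharp p = {w. (\<forall>i. w (i + int p) = w i) \<and> (\<Sum>i\<in>{1..int p}. w i) = 0}"

definition avgY :: "nat \<Rightarrow> (int \<Rightarrow> int \<Rightarrow> real) \<Rightarrow> int \<Rightarrow> real" where
  "avgY p g i = (1 / real p) * (\<Sum>j\<in>{1..int p}. g i j)"

definition psi0 :: "nat \<Rightarrow> (int \<Rightarrow> int \<Rightarrow> real) \<Rightarrow> int \<Rightarrow> real" where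
  "psi0 p psi i = inverse (avgY p (\<lambda>i j. 1 / psi i j) i)"

definition valid_mesh :: "nat \<Rightarrow> nat \<Rightarrow> (nat \<Rightarrow> int) \<Rightarrow> bool" where
  "valid_mesh N K idx \<longleftrightarrow> K \<ge> 1 \<and> idx 1 = 1 \<and> (\<forall>k\<in>{1..<K}. idx k < idx (Suc k))
     \<and> idx K \<le> int N \<and> idx (Suc K) = int N + 1"

definition Hk :: "nat \<Rightarrow> (nat \<Rightarrow> int) \<Rightarrow> nat \<Rightarrow> real" where
  "Hk N idx k = eps N * real_of_int (idx (Suc k) - idx k)"

definition Hmax :: "nat \<Rightarrow> nat \<Rightarrow> (nat \<Rightarrow> int) \<Rightarrow> real" where
  "Hmax N K idx = Max (Hk N idx ` {1..K})"

text \<open>Sampling domains S_k^rep = {rep k ..< rep k + p} inside S_k = {idx k ..< idx (k+1)},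
  collocation index coll k in S_k^rep.\<close>
definition valid_sampling :: "nat \<Rightarrow> nat \<Rightarrow> (nat \<Rightarrow> int) \<Rightarrow> (nat \<Rightarrow> int) \<Rightarrow> (nat \<Rightarrow> int) \<Rightarrow> bool" where
  "valid_sampling p K idx rep coll \<longleftrightarrow>
     (\<forall>k\<in>{1..K}. idx k \<le> rep k \<and> rep k + int p \<le> idx (Suc k)
                 \<and> rep k \<le> coll k \<and> coll k < rep k + int p)"

definition is_affine_on :: "nat \<Rightarrow> (int \<Rightarrow> real) \<Rightarrow> int set \<Rightarrow> bool" where
  "is_affine_on N v A \<longleftrightarrow> (\<exists>a b. \<forall>i\<in>A. v i = a + b * Xpt N i)"

definition UHper :: "nat \<Rightarrow> nat \<Rightarrow> (nat \<Rightarrow> int) \<Rightarrow> (int \<Rightarrow> real) set" where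
  "UHper N K idx = {v \<in> Uper N. \<forall>k\<in>{1..K}. is_affine_on N v {idx k..idx (Suc k)}}"

definition UHsharp :: "nat \<Rightarrow> nat \<Rightarrow> (nat \<Rightarrow> int) \<Rightarrow> (int \<Rightarrow> real) set" where
  "UHsharp N K idx = UHper N K idx \<inter> Usharp N"

definition ipRep :: "nat \<Rightarrow> int \<Rightarrow> (int \<Rightarrow> real) \<Rightarrow> (int \<Rightarrow> real) \<Rightarrow> real" where
  "ipRep p r a b = (1 / real p) * (\<Sum>i\<in>{r..<r + int p}. a i * b i)"

text \<open>psi^eps_{coll,k}(X_i) = psi(X_{coll k}, X_i / eps) = psi(X_{coll k}, Y_i).\<close>
definition psi_coll :: "(int \<Rightarrow> int \<Rightarrow> real) \<Rightarrow> (nat \<Rightarrow> int) \<Rightarrow> nat \<Rightarrow> int \<Rightarrow> real" where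
  "psi_coll psi coll k = (\<lambda>i. psi (coll k) i)"

definition ell :: "nat \<Rightarrow> (nat \<Rightarrow> int) \<Rightarrow> nat \<Rightarrow> (int \<Rightarrow> real) \<Rightarrow> int \<Rightarrow> real" where
  "ell N idx k v = (THE l. (\<exists>a b. \<forall>i. l i = a + b * Xpt N i)
                          \<and> (\<forall>i\<in>{idx k..idx (Suc k)}. l i = v i))"

definition cellw :: "nat \<Rightarrow> nat \<Rightarrow> (int \<Rightarrow> int \<Rightarrow> real) \<Rightarrow> (nat \<Rightarrow> int) \<Rightarrow> (nat \<Rightarrow> int)
    \<Rightarrow> (nat \<Rightarrow> int) \<Rightarrow> nat \<Rightarrow> (int \<Rightarrow> real) \<Rightarrow> int \<Rightarrow> real" where
  "cellw N p psi idx rep coll k v = (THE w. w \<in> Upsharp p \<and>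
      (\<forall>s\<in>Upsharp p. ipRep p (rep k)
          (\<lambda>i. psi_coll psi coll k i * Dd N (\<lambda>j. ell N idx k v j + w j) i) (Dd N s) = 0))"

definition Rk :: "nat \<Rightarrow> nat \<Rightarrow> (int \<Rightarrow> int \<Rightarrow> real) \<Rightarrow> (nat \<Rightarrow> int) \<Rightarrow> (nat \<Rightarrow> int)
    \<Rightarrow> (nat \<Rightarrow> int) \<Rightarrow> nat \<Rightarrow> (int \<Rightarrow> real) \<Rightarrow> int \<Rightarrow> real" where
  "Rk N p psi idx rep coll k v = (\<lambda>i. ell N idx k v i + cellw N p psi idx rep coll k v i)"

definition BHQC :: "nat \<Rightarrow> nat \<Rightarrow> (int \<Rightarrow> int \<Rightarrow> real) \<Rightarrow> nat \<Rightarrow> (nat \<Rightarrow> int) \<Rightarrow> (nat \<Rightarrow> int)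
    \<Rightarrow> (nat \<Rightarrow> int) \<Rightarrow> (int \<Rightarrow> real) \<Rightarrow> (int \<Rightarrow> real) \<Rightarrow> real" where
  "BHQC N p psi K idx rep coll u v = (\<Sum>k\<in>{1..K}. Hk N idx k *
      ipRep p (rep k) (\<lambda>i. psi_coll psi coll k i * Dd N (Rk N p psi idx rep coll k u) i)
                      (Dd N (Rk N p psi idx rep coll k v)))"

end

theory Submission
  imports Defs "HOL-Analysis.L2_Norm" "HOL-Analysis.Convex"
begin

text \<open>In one space dimension everything is explicit. Let \<open>\<sigma>\<close> be the discrete flux of \<open>f\<close>,
  an antiderivative of \<open>-f\<close> normalised so that \<open>\<sigma>/\<psi>\<^sup>0\<close> has mean zero; then
  \<open>Du\<^sup>0 = \<sigma>/\<psi>\<^sup>0\<close>. The cell problems can be solved in closed form (the cell flux is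
  constant), and the HQC bilinear form turns out to be the finite element form with \<open>\<psi>\<^sup>0\<close>
  frozen at the collocation point of each element, which by (A2) is an \<open>O(H)\<close> perturbation
  of \<open>\<psi>\<^sup>0\<close>. Cea's lemma, with the piecewise linear function whose slopes are the nodal
  values of \<open>\<sigma>/\<psi>\<^sup>0\<close> (shifted to mean zero) as comparison function, gives the \<open>H\<^sup>1\<close>
  estimate for both \<open>u\<^sup>H\<close> and the finite element solution for \<open>\<psi>\<^sup>0\<close>. For the latter an
  Aubin--Nitsche duality argument, testing with the flux of the error, gains another factor
  \<open>H\<close>; the \<open>L\<^sup>2\<close> estimate follows by the triangle inequality.\<close>

section \<open>Sums over windows of consecutive integers\<close>

lemma sum_int_window_reindex:
  "(\<Sum>i\<in>{r..<r + int q}. h i) = (\<Sum>n<q. h (r + int n))"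
proof -
  have "bij_betw (\<lambda>n. r + int n) {..<q} {r..<r + int q}"
  proof (rule bij_betw_byWitness[where f' = "\<lambda>i. nat (i - r)"])
    show "(\<lambda>n. r + int n) ` {..<q} \<subseteq> {r..<r + int q}" by auto
    show "(\<lambda>i. nat (i - r)) ` {r..<r + int q} \<subseteq> {..<q}" by auto
  qed auto
  then show ?thesis by (simp add: sum.reindex_bij_betw[symmetric])
qed

lemma sum_int_window_telescope:
  "(\<Sum>i\<in>{r..<r + int q}. v (i + 1) - v i) = v (r + int q) - (v r :: real)"
proof -
  have "(\<Sum>i\<in>{r..<r + int q}. v (i + 1) - v i) = (\<Sum>n<q. v (r + int (Suc n)) - v (r + int n))"
    by (simp add: sum_int_window_reindex ac_simps)
  also have "\<dots> = v (r + int q) - v r"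
    by (subst sum_lessThan_telescope[where f = "\<lambda>n. v (r + int n)"]) simp
  finally show ?thesis .
qed

lemma sum_int_window_periodic_diff:
  assumes "\<forall>i. v (i + int q) = v i"
  shows "(\<Sum>i\<in>{r..<r + int q}. v (i + 1) - v i) = (0::real)"
  using sum_int_window_telescope[of v r q] assms by simp

lemma periodic_add_mult:
  assumes "\<forall>i. g (i + int q) = g i"
  shows "g (x + int q * n) = g x"
proof (induction n rule: int_induct[where k = 0])
  case (step1 i)
  have "g (x + int q * (i + 1)) = g ((x + int q * i) + int q)" by (simp add: algebra_simps)
  then show ?case using assms step1 by simp
next
  case (step2 i)
  have "g (x + int q * i) = g ((x + int q * (i - 1)) + int q)" by (simp add: algebra_simps)
  then show ?case using assms step2 by simp
qed simp

lemma periodic_mod: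
  assumes "\<forall>i. g (i + int q) = g i"
  shows "g (r + (x - r) mod int q) = g x"
proof -
  have "x = (r + (x - r) mod int q) + int q * ((x - r) div int q)" by simp
  then show ?thesis
    using periodic_add_mult[OF assms, of "r + (x - r) mod int q" "(x - r) div int q"] by metis
qed

lemma sum_int_window_periodic:
  fixes g :: "int \<Rightarrow> real"
  assumes per: "\<forall>i. g (i + int q) = g i"
  shows "(\<Sum>i\<in>{r..<r + int q}. g i) = (\<Sum>i\<in>{s..<s + int q}. g i)"
proof -
  define W where "W r = (\<Sum>i\<in>{r..<r + int q}. g i)" for r
  have W_step: "W (r + 1) = W r" for r
  proof -
    have "W (r + 1) - W r = (\<Sum>i\<in>{r..<r + int q}. g (i + 1) - g i)"
      unfolding W_def sum_int_window_reindex by (simp add: sum_subtractf algebra_simps)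
    then show ?thesis using sum_int_window_periodic_diff[OF per] by simp
  qed
  have "W x = W 0" for x
  proof (induction x rule: int_induct[where k = 0])
    case (step2 i) then show ?case using W_step[of "i - 1"] by simp
  qed (use W_step in simp_all)
  then show ?thesis unfolding W_def by metis
qed

lemma periodic_antiderivative:
  fixes g :: "int \<Rightarrow> real"
  assumes q: "q > 0" and g0: "(\<Sum>i\<in>{r..<r + int q}. g i) = 0"
  obtains v where "\<forall>i. v (i + int q) = v i"
    and "\<forall>i\<in>{r..r + int q}. v i = e * (\<Sum>l\<in>{r..<i}. g l)"
    and "\<forall>i\<in>{r..<r + int q}. v (i + 1) - v i = e * g i"
proof
  define v where "v i = e * (\<Sum>l\<in>{r..<r + (i - r) mod int q}. g l)" for i
  show "\<forall>i. v (i + int q) = v i"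
  proof
    fix i
    have "(i + int q - r) mod int q = (i - r) mod int q"
      by (metis add.commute add_diff_eq mod_add_self1)
    then show "v (i + int q) = v i" unfolding v_def by simp
  qed
  show val: "\<forall>i\<in>{r..r + int q}. v i = e * (\<Sum>l\<in>{r..<i}. g l)"
  proof
    fix i assume i: "i \<in> {r..r + int q}"
    show "v i = e * (\<Sum>l\<in>{r..<i}. g l)"
    proof (cases "i = r + int q")
      case False
      then have "(i - r) mod int q = i - r" using i by (intro mod_pos_pos_trivial) auto
      then show ?thesis unfolding v_def by simp
    qed (use g0 in \<open>simp add: v_def\<close>)
  qed
  show "\<forall>i\<in>{r..<r + int q}. v (i + 1) - v i = e * g i"
  proof
    fix i assume i: "i \<in> {r..<r + int q}"
    then have "{r..<i + 1} = insert i {r..<i}" by auto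
    then show "v (i + 1) - v i = e * g i" using val i by (simp add: algebra_simps)
  qed
qed

section \<open>The discrete inner product and norms\<close>

abbreviation grid :: "nat \<Rightarrow> int set" where
  "grid N \<equiv> {1..int N}"

lemma eps_pos: "N > 0 \<Longrightarrow> eps N > 0"
  by (simp add: eps_def)

lemma grid_eq_window: "{1..<1 + int N} = grid N"
  by auto

lemma ipX_cong:
  "(\<And>i. i \<in> grid N \<Longrightarrow> u i = u' i) \<Longrightarrow> (\<And>i. i \<in> grid N \<Longrightarrow> v i = v' i)
    \<Longrightarrow> ipX N u v = ipX N u' v'"
  unfolding ipX_def by (intro arg_cong[where f = "\<lambda>x. _ * x"] sum.cong) auto

lemma L2_cong: "(\<And>i. i \<in> grid N \<Longrightarrow> u i = u' i) \<Longrightarrow> L2 N u = L2 N u'"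
  unfolding L2_def using ipX_cong[of N u u' u u'] by simp

lemma ipX_diff_left: "ipX N (\<lambda>i. u i - w i) v = ipX N u v - ipX N w v"
  unfolding ipX_def by (simp add: algebra_simps sum_subtractf)

lemma ipX_self_nonneg: "ipX N u u \<ge> 0"
  unfolding ipX_def by (auto intro!: sum_nonneg divide_nonneg_nonneg)

lemma L2_nonneg: "L2 N u \<ge> 0"
  unfolding L2_def using ipX_self_nonneg by simp

lemma L2_squared: "(L2 N u)\<^sup>2 = ipX N u u"
  unfolding L2_def using ipX_self_nonneg by simp

lemma L2_eq_L2_set: "L2 N u = sqrt (1 / real N) * L2_set u (grid N)"
  unfolding L2_def ipX_def L2_set_def by (simp add: real_sqrt_divide power2_eq_square)

lemma ipX_le_L2_mult: "ipX N u v \<le> L2 N u * L2 N v"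
proof -
  have "ipX N u v \<le> (1 / real N) * (\<Sum>i\<in>grid N. \<bar>u i\<bar> * \<bar>v i\<bar>)"
    unfolding ipX_def by (intro mult_left_mono sum_mono) (auto simp: abs_mult[symmetric])
  also have "\<dots> \<le> (1 / real N) * (L2_set u (grid N) * L2_set v (grid N))"
    by (intro mult_left_mono L2_set_mult_ineq) auto
  also have "\<dots> = L2 N u * L2 N v"
  proof -
    have "sqrt (1 / real N) * sqrt (1 / real N) = 1 / real N" by simp
    then show ?thesis unfolding L2_eq_L2_set by (metis mult.assoc mult.left_commute)
  qed
  finally show ?thesis .
qed

lemma L2_add_le: "L2 N (\<lambda>i. u i + v i) \<le> L2 N u + L2 N v"
  unfolding L2_eq_L2_set
  by (metis L2_set_triangle_ineq distrib_left mult_left_mono real_sqrt_ge_zero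
      zero_le_divide_1_iff of_nat_0_le_iff)

lemma L2_diff_le: "L2 N (\<lambda>i. u i - v i) \<le> L2 N u + L2 N v"
proof -
  have "L2 N (\<lambda>i. - v i) = L2 N v" unfolding L2_def ipX_def by simp
  then show ?thesis using L2_add_le[of N u "\<lambda>i. - v i"] by simp
qed

lemma L2_diff_commute: "L2 N (\<lambda>i. u i - v i) = L2 N (\<lambda>i. v i - u i)"
  unfolding L2_def ipX_def by (simp add: algebra_simps)

lemma L2_const: "N > 0 \<Longrightarrow> L2 N (\<lambda>_. t) = \<bar>t\<bar>"
  unfolding L2_def ipX_def by (simp add: power2_eq_square[symmetric])

lemma L2_le_of_ipX_le: "ipX N u u \<le> B\<^sup>2 \<Longrightarrow> B \<ge> 0 \<Longrightarrow> L2 N u \<le> B"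
  unfolding L2_def by (metis real_sqrt_abs real_sqrt_le_mono abs_of_nonneg)

lemma L2_le_scaled:
  assumes "\<And>i. i \<in> grid N \<Longrightarrow> \<bar>u i\<bar> \<le> k * \<bar>v i\<bar>" and "k \<ge> 0"
  shows "L2 N u \<le> k * L2 N v"
proof (rule L2_le_of_ipX_le)
  have "(\<Sum>i\<in>grid N. u i * u i) \<le> (\<Sum>i\<in>grid N. k\<^sup>2 * (v i * v i))"
  proof (intro sum_mono)
    fix i assume "i \<in> grid N"
    then have "\<bar>u i\<bar> * \<bar>u i\<bar> \<le> (k * \<bar>v i\<bar>) * (k * \<bar>v i\<bar>)"
      using assms by (intro mult_mono) auto
    then show "u i * u i \<le> k\<^sup>2 * (v i * v i)"
      by (simp add: power2_eq_square abs_mult[symmetric] algebra_simps)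
  qed
  then show "ipX N u u \<le> (k * L2 N v)\<^sup>2"
    unfolding power_mult_distrib L2_squared ipX_def
    by (simp add: sum_distrib_left[symmetric] divide_right_mono)
qed (use assms L2_nonneg in simp)

lemma L2_mult_le:
  assumes "\<And>i. i \<in> grid N \<Longrightarrow> \<bar>w i\<bar> \<le> k" and "k \<ge> 0"
  shows "L2 N (\<lambda>i. w i * u i) \<le> k * L2 N u"
  using assms by (intro L2_le_scaled) (auto simp: abs_mult intro: mult_right_mono)

lemma L2_le_const:
  assumes "N > 0" and "\<And>i. i \<in> grid N \<Longrightarrow> \<bar>u i\<bar> \<le> M"
  shows "L2 N u \<le> M"
proof -
  have "\<bar>u 1\<bar> \<le> M" using assms by simp
  then have M: "M \<ge> 0" by linarith
  have "L2 N u \<le> M * L2 N (\<lambda>_. 1)" using assms M by (intro L2_le_scaled) auto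
  then show ?thesis using L2_const[OF assms(1)] by simp
qed

lemma mean_abs_le_L2: "(1 / real N) * (\<Sum>i\<in>grid N. \<bar>u i\<bar>) \<le> L2 N u"
proof (cases "N = 0")
  case False
  have "ipX N (\<lambda>i. \<bar>u i\<bar>) (\<lambda>_. 1) \<le> L2 N (\<lambda>i. \<bar>u i\<bar>) * L2 N (\<lambda>_. 1)"
    by (rule ipX_le_L2_mult)
  moreover have "L2 N (\<lambda>i. \<bar>u i\<bar>) = L2 N u"
    unfolding L2_def ipX_def by (simp add: abs_mult[symmetric])
  ultimately show ?thesis using L2_const[of N 1] False unfolding ipX_def by simp
qed (use L2_nonneg in simp)

lemma ipX_weighted_ge:
  assumes "\<forall>i\<in>grid N. c \<le> al i"
  shows "c * ipX N u u \<le> ipX N (\<lambda>i. al i * u i) u"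
proof -
  have "(\<Sum>i\<in>grid N. c * (u i * u i)) \<le> (\<Sum>i\<in>grid N. al i * u i * u i)"
    using assms by (intro sum_mono) (auto simp: mult.assoc intro: mult_right_mono)
  then show ?thesis unfolding ipX_def
    by (simp add: sum_distrib_left[symmetric] mult.left_commute divide_right_mono)
qed

lemma Dd_add: "Dd N (\<lambda>j. u j + w j) i = Dd N u i + Dd N w i"
  unfolding Dd_def by (simp add: add_divide_distrib[symmetric] algebra_simps)

lemma Dd_diff: "Dd N (\<lambda>j. u j - w j) i = Dd N u i - Dd N w i"
  unfolding Dd_def by (simp add: diff_divide_distrib[symmetric] algebra_simps)

lemma sum_Dd_periodic:
  assumes "\<forall>i. v (i + int q) = v i"
  shows "(\<Sum>i\<in>{r..<r + int q}. Dd N v i) = 0"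
  using sum_int_window_periodic_diff[OF assms, of r]
  unfolding Dd_def by (simp add: sum_divide_distrib[symmetric])

lemma sum_grid_Dd: "u \<in> Uper N \<Longrightarrow> (\<Sum>i\<in>grid N. Dd N u i) = 0"
  using sum_Dd_periodic[where v = u and q = N and r = 1 and N = N]
  unfolding Uper_def grid_eq_window by simp

lemma Usharp_antiderivative:
  assumes N: "N > 0" and g0: "(\<Sum>i\<in>grid N. g i) = 0"
  obtains v where "v \<in> Usharp N" and "\<forall>i\<in>grid N. Dd N v i = g i"
proof -
  obtain v0 where per: "\<forall>i. v0 (i + int N) = v0 i"
    and inc: "\<forall>i\<in>grid N. v0 (i + 1) - v0 i = eps N * g i"
    using periodic_antiderivative[where q = N and r = 1 and g = g and e = "eps N"] N g0
    unfolding grid_eq_window by metis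
  define v where "v i = v0 i - avgX N v0" for i
  have "v \<in> Usharp N"
    unfolding Usharp_def Uper_def using per N by (simp add: v_def avgX_def sum_subtractf)
  moreover have "\<forall>i\<in>grid N. Dd N v i = g i"
    using inc eps_pos[OF N] unfolding Dd_def v_def by simp
  ultimately show thesis by (rule that)
qed

section \<open>Meshes, piecewise constant and piecewise linear functions\<close>

abbreviation elem :: "(nat \<Rightarrow> int) \<Rightarrow> nat \<Rightarrow> int set" where
  "elem idx k \<equiv> {idx k..<idx (Suc k)}"

definition pwconst :: "nat \<Rightarrow> (nat \<Rightarrow> int) \<Rightarrow> (nat \<Rightarrow> real) \<Rightarrow> int \<Rightarrow> real" where
  "pwconst K idx c i = (\<Sum>k\<in>{1..K}. if i \<in> elem idx k then c k else 0)"

definition slope :: "nat \<Rightarrow> (nat \<Rightarrow> int) \<Rightarrow> (int \<Rightarrow> real) \<Rightarrow> nat \<Rightarrow> real" where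
  "slope N idx v k = Dd N v (idx k)"

lemma pwconst_diff: "pwconst K idx (\<lambda>k. x k - y k) i = pwconst K idx x i - pwconst K idx y i"
  unfolding pwconst_def sum_subtractf[symmetric] by (intro sum.cong) auto

lemma Hk_le_Hmax: "k \<in> {1..K} \<Longrightarrow> Hk N idx k \<le> Hmax N K idx"
  unfolding Hmax_def by (intro Max_ge) auto

lemma is_affine_onE:
  assumes "is_affine_on N u A"
  obtains a b where "\<forall>i\<in>A. u i = a + b * Xpt N i"
  using assms unfolding is_affine_on_def by blast

lemma is_affine_on_diff:
  assumes "is_affine_on N u A" and "is_affine_on N v A"
  shows "is_affine_on N (\<lambda>i. u i - v i) A"
proof -
  from assms(1) obtain a b where "\<forall>i\<in>A. u i = a + b * Xpt N i" by (rule is_affine_onE)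
  moreover from assms(2) obtain a' b' where "\<forall>i\<in>A. v i = a' + b' * Xpt N i" by (rule is_affine_onE)
  ultimately
  have "\<forall>i\<in>A. u i - v i = (a - a') + (b - b') * Xpt N i" by (simp add: algebra_simps)
  then show ?thesis unfolding is_affine_on_def by blast
qed

lemma UHsharp_diff:
  assumes u: "u \<in> UHsharp N K idx" and v: "v \<in> UHsharp N K idx"
  shows "(\<lambda>i. u i - v i) \<in> UHsharp N K idx"
proof -
  have "(\<lambda>i. u i - v i) \<in> Uper N"
    using u v unfolding UHsharp_def Usharp_def Uper_def by auto
  moreover have "avgX N (\<lambda>i. u i - v i) = 0"
    using u v unfolding UHsharp_def Usharp_def avgX_def by (auto simp: sum_subtractf right_diff_distrib)
  moreover have "\<forall>k\<in>{1..K}. is_affine_on N (\<lambda>i. u i - v i) {idx k..idx (Suc k)}"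
    using u v unfolding UHsharp_def UHper_def by (simp add: is_affine_on_diff)
  ultimately show ?thesis unfolding UHsharp_def UHper_def Usharp_def by blast
qed
lemma UHper_Dd_elem:
  assumes N: "N > 0" and v: "v \<in> UHper N K idx" and k: "k \<in> {1..K}"
    and i: "i \<in> elem idx k"
  shows "Dd N v i = slope N idx v k"
proof -
  have "is_affine_on N v {idx k..idx (Suc k)}" using v k unfolding UHper_def by simp
  then obtain a b where ab: "\<forall>i\<in>{idx k..idx (Suc k)}. v i = a + b * Xpt N i"
    by (rule is_affine_onE)
  have "Dd N v j = b" if "j \<in> elem idx k" for j
  proof -
    have "v (j + 1) = a + b * Xpt N (j + 1)" "v j = a + b * Xpt N j" using ab that by auto
    then show ?thesis unfolding Dd_def Xpt_def using eps_pos[OF N] by (simp add: algebra_simps)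
  qed
  moreover have "idx k \<in> elem idx k" using i by simp
  ultimately show ?thesis unfolding slope_def using i by simp
qed

locale mesh =
  fixes N K :: nat and idx :: "nat \<Rightarrow> int"
  assumes N_pos: "N > 0" and valid: "valid_mesh N K idx"
begin

lemma idx_less_Suc: "k \<in> {1..K} \<Longrightarrow> idx k < idx (Suc k)"
  using valid unfolding valid_mesh_def by (cases "k = K") auto

lemma idx_mono: "1 \<le> k \<Longrightarrow> k \<le> l \<Longrightarrow> l \<le> Suc K \<Longrightarrow> idx k \<le> idx l"
proof (induction l)
  case (Suc l)
  then show ?case
    using idx_less_Suc[of l] by (cases "k = Suc l") fastforce+
qed simp

lemma idx_bounds:
  assumes "1 \<le> k" "k \<le> Suc K"
  shows "1 \<le> idx k" "idx k \<le> int N + 1"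
  using idx_mono[OF order_refl assms(1)] idx_mono[OF assms order_refl] valid assms
  unfolding valid_mesh_def by auto

lemma elem_subset_grid: "k \<in> {1..K} \<Longrightarrow> elem idx k \<subseteq> grid N"
  using idx_bounds[of k] idx_bounds[of "Suc k"] by auto

lemma sum_grid_split: "(\<Sum>i\<in>grid N. h i) = (\<Sum>k\<in>{1..K}. \<Sum>i\<in>elem idx k. (h i :: real))"
proof -
  have "(\<Sum>k\<in>{1..m}. \<Sum>i\<in>elem idx k. h i) = (\<Sum>i\<in>{1..<idx (Suc m)}. h i)" if "m \<le> K" for m
    using that
  proof (induction m)
    case 0 then show ?case using valid unfolding valid_mesh_def by simp
  next
    case (Suc m)
    have "1 \<le> idx (Suc m)" "idx (Suc m) \<le> idx (Suc (Suc m))"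
      using idx_bounds[of "Suc m"] idx_mono[of "Suc m" "Suc (Suc m)"] Suc.prems by auto
    then have "{1..<idx (Suc (Suc m))} = {1..<idx (Suc m)} \<union> elem idx (Suc m)" by auto
    then have "(\<Sum>i\<in>{1..<idx (Suc (Suc m))}. h i)
        = (\<Sum>i\<in>{1..<idx (Suc m)}. h i) + (\<Sum>i\<in>elem idx (Suc m). h i)"
      by (simp add: sum.union_disjoint)
    then show ?case using Suc by simp
  qed
  from this[of K] show ?thesis
    using valid unfolding valid_mesh_def by (simp add: atLeastLessThanPlusOne_atLeastAtMost_int)
qed

lemma grid_covered:
  assumes i: "i \<in> grid N"
  obtains k where "k \<in> {1..K}" and "i \<in> elem idx k"
proof -
  have "(\<Sum>k\<in>{1..K}. \<Sum>j\<in>elem idx k. if j = i then 1 else 0) = (1::real)"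
    using sum_grid_split[of "\<lambda>j. if j = i then 1 else 0"] i by simp
  then have "\<exists>k\<in>{1..K}. (\<Sum>j\<in>elem idx k. if j = i then 1 else 0) \<noteq> (0::real)"
    by (metis (no_types, lifting) sum.neutral zero_neq_one)
  then show thesis using that by (auto split: if_splits)
qed

lemma pwconst_eq:
  assumes k: "k \<in> {1..K}" and i: "i \<in> elem idx k"
  shows "pwconst K idx c i = c k"
proof -
  have "i \<notin> elem idx k'" if "k' \<in> {1..K}" "k' \<noteq> k" for k'
  proof (cases "k' < k")
    case True
    then show ?thesis using idx_mono[of "Suc k'" k] k i by auto
  next
    case False
    then show ?thesis using idx_mono[of "Suc k" k'] that i by auto
  qed
  then have "pwconst K idx c i = (\<Sum>k'\<in>{1..K}. if k' = k then c k else 0)"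
    unfolding pwconst_def using i by (intro sum.cong) auto
  then show ?thesis using k by simp
qed

lemma pwconst_const: "i \<in> grid N \<Longrightarrow> pwconst K idx (\<lambda>_. t) i = t"
  by (elim grid_covered) (simp add: pwconst_eq)

lemma Dd_UHper_eq_pwconst:
  assumes v: "v \<in> UHper N K idx" and i: "i \<in> grid N"
  shows "Dd N v i = pwconst K idx (slope N idx v) i"
proof -
  obtain k where "k \<in> {1..K}" "i \<in> elem idx k" using grid_covered[OF i] .
  then show ?thesis by (simp add: pwconst_eq UHper_Dd_elem[OF N_pos v])
qed

lemma Hk_eq_sum: "k \<in> {1..K} \<Longrightarrow> Hk N idx k = eps N * (\<Sum>i\<in>elem idx k. 1)"
  unfolding Hk_def using idx_less_Suc[of k] by simp

lemma Hk_nonneg: "k \<in> {1..K} \<Longrightarrow> Hk N idx k \<ge> 0"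
  unfolding Hk_def eps_def using idx_less_Suc[of k] by simp

lemma Hmax_nonneg: "Hmax N K idx \<ge> 0"
  using Hk_nonneg[of 1] Hk_le_Hmax[of 1 K N idx] valid unfolding valid_mesh_def by fastforce

lemma sum_Hk: "(\<Sum>k\<in>{1..K}. Hk N idx k) = 1"
proof -
  have "(\<Sum>k\<in>{1..K}. Hk N idx k) = eps N * (\<Sum>k\<in>{1..K}. \<Sum>i\<in>elem idx k. 1)"
    by (simp add: Hk_eq_sum sum_distrib_left)
  also have "\<dots> = eps N * (\<Sum>i\<in>grid N. 1)" by (metis sum_grid_split)
  finally show ?thesis using N_pos by (simp add: eps_def)
qed

lemma sum_grid_elem_const:
  "(1 / real N) * (\<Sum>k\<in>{1..K}. \<Sum>i\<in>elem idx k. g k) = (\<Sum>k\<in>{1..K}. Hk N idx k * g k)"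
proof -
  have elem: "(1 / real N) * (\<Sum>i\<in>elem idx k. g k) = Hk N idx k * g k" if "k \<in> {1..K}" for k
    using Hk_eq_sum[OF that] by (simp add: eps_def)
  have "(1 / real N) * (\<Sum>k\<in>{1..K}. \<Sum>i\<in>elem idx k. g k)
      = (\<Sum>k\<in>{1..K}. (1 / real N) * (\<Sum>i\<in>elem idx k. g k))"
    by (rule sum_distrib_left)
  also have "\<dots> = (\<Sum>k\<in>{1..K}. Hk N idx k * g k)" by (rule sum.cong[OF refl elem])
  finally show ?thesis .
qed

lemma ipX_pwconst:
  "ipX N (pwconst K idx A) (pwconst K idx B) = (\<Sum>k\<in>{1..K}. Hk N idx k * (A k * B k))"
proof -
  have "ipX N (pwconst K idx A) (pwconst K idx B)
      = (1 / real N) * (\<Sum>k\<in>{1..K}. \<Sum>i\<in>elem idx k. A k * B k)"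
    unfolding ipX_def sum_grid_split
    by (intro arg_cong[where f = "\<lambda>x. _ * x"] sum.cong refl) (simp add: pwconst_eq)
  also have "\<dots> = (\<Sum>k\<in>{1..K}. Hk N idx k * (A k * B k))" by (rule sum_grid_elem_const)
  finally show ?thesis .
qed

lemma pwconst_antiderivative:
  assumes g0: "(\<Sum>i\<in>grid N. pwconst K idx c i) = 0"
  obtains v where "v \<in> UHsharp N K idx" and "\<forall>i\<in>grid N. Dd N v i = pwconst K idx c i"
proof -
  let ?g = "pwconst K idx c"
  obtain v0 where per: "\<forall>i. v0 (i + int N) = v0 i"
    and val: "\<forall>i\<in>{1..1 + int N}. v0 i = eps N * (\<Sum>l\<in>{1..<i}. ?g l)"
    and inc: "\<forall>i\<in>grid N. v0 (i + 1) - v0 i = eps N * ?g i"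
    using periodic_antiderivative[where q = N and r = 1 and g = ?g and e = "eps N"] N_pos g0
    unfolding grid_eq_window by metis
  define v where "v i = v0 i - avgX N v0" for i
  have "is_affine_on N v {idx k..idx (Suc k)}" if k: "k \<in> {1..K}" for k
  proof -
    have bds: "1 \<le> idx k" "idx (Suc k) \<le> int N + 1" using idx_bounds[of k] idx_bounds[of "Suc k"] k by auto
    define A where "A = eps N * (\<Sum>l\<in>{1..<idx k}. ?g l) - avgX N v0 - c k * eps N * real_of_int (idx k)"
    show ?thesis unfolding is_affine_on_def
    proof (intro exI ballI)
      fix i assume i: "i \<in> {idx k..idx (Suc k)}"
      have "{1..<i} = {1..<idx k} \<union> {idx k..<i}" using i bds by auto
      then have "(\<Sum>l\<in>{1..<i}. ?g l) = (\<Sum>l\<in>{1..<idx k}. ?g l) + (\<Sum>l\<in>{idx k..<i}. ?g l)"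
        by (simp add: sum.union_disjoint)
      also have "(\<Sum>l\<in>{idx k..<i}. ?g l) = (\<Sum>l\<in>{idx k..<i}. c k)"
        using i k by (intro sum.cong refl pwconst_eq) auto
      finally have "v i = eps N * ((\<Sum>l\<in>{1..<idx k}. ?g l) + real_of_int (i - idx k) * c k) - avgX N v0"
        unfolding v_def using val i bds by simp
      then show "v i = A + c k * Xpt N i" unfolding A_def Xpt_def by (simp add: algebra_simps)
    qed
  qed
  then have "v \<in> UHsharp N K idx"
    unfolding UHsharp_def UHper_def Usharp_def Uper_def
    using per N_pos by (simp add: v_def avgX_def sum_subtractf)
  moreover have "\<forall>i\<in>grid N. Dd N v i = ?g i"
    using inc eps_pos[OF N_pos] unfolding Dd_def v_def by simp
  ultimately show thesis by (rule that)
qed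

end

section \<open>Bounds and Lipschitz continuity of the homogenized coefficient\<close>

lemma mean_bounds:
  assumes p: "p > 0" and lo: "\<And>j. lo \<le> g j" and hi: "\<And>j. g j \<le> hi"
  shows "lo \<le> (1 / real p) * (\<Sum>j\<in>{1..int p}. g j)" and "(1 / real p) * (\<Sum>j\<in>{1..int p}. g j) \<le> hi"
proof -
  have "real p * lo \<le> (\<Sum>j\<in>{1..int p}. g j)"
    using sum_mono[of "{1..int p}" "\<lambda>_. lo" g] lo by simp
  then show "lo \<le> (1 / real p) * (\<Sum>j\<in>{1..int p}. g j)" using p by (simp add: field_simps)
  have "(\<Sum>j\<in>{1..int p}. g j) \<le> real p * hi"
    using sum_mono[of "{1..int p}" g "\<lambda>_. hi"] hi by simp
  then show "(1 / real p) * (\<Sum>j\<in>{1..int p}. g j) \<le> hi" using p by (simp add: field_simps)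
qed

lemma inverse_mean_bounds:
  assumes p: "p > 0" and c: "c > 0" and bnd: "\<forall>i j. c \<le> psi i j \<and> psi i j \<le> C"
  shows "1 / C \<le> avgY p (\<lambda>i j. 1 / psi i j) i" and "avgY p (\<lambda>i j. 1 / psi i j) i \<le> 1 / c"
proof -
  have pos: "0 < psi i j" for j using bnd c by (meson order_less_le_trans)
  then have "C > 0" using bnd by (meson order_less_le_trans)
  have "1 / C \<le> 1 / psi i j" and "1 / psi i j \<le> 1 / c" for j
    using bnd c pos \<open>C > 0\<close> by (auto intro!: divide_left_mono mult_pos_pos)
  then show "1 / C \<le> avgY p (\<lambda>i j. 1 / psi i j) i" "avgY p (\<lambda>i j. 1 / psi i j) i \<le> 1 / c"
    unfolding avgY_def using mean_bounds[OF p, of "1 / C" "\<lambda>j. 1 / psi i j" "1 / c"] by auto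
qed

lemma psi0_bounds:
  assumes p: "p > 0" and c: "c > 0" and bnd: "\<forall>i j. c \<le> psi i j \<and> psi i j \<le> C"
  shows "c \<le> psi0 p psi i" and "psi0 p psi i \<le> C"
proof -
  have C: "C > 0" using bnd c by (meson order_less_le_trans)
  define m where "m = avgY p (\<lambda>i j. 1 / psi i j) i"
  have m: "1 / C \<le> m" "m \<le> 1 / c" unfolding m_def using inverse_mean_bounds[OF p c bnd] by auto
  then have "m > 0" using C by (meson order_less_le_trans zero_less_divide_1_iff)
  then show "c \<le> psi0 p psi i" "psi0 p psi i \<le> C"
    unfolding psi0_def m_def[symmetric] using m c C by (simp_all add: field_simps)
qed

lemma Linf2_ge:
  assumes "i \<in> {1..int N}" and "j \<in> {1..int p}"
  shows "\<bar>g i j\<bar> \<le> Linf2 N p g"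
  unfolding Linf2_def
proof (rule Max_ge)
  show "finite {\<bar>g i j\<bar> |i j. i \<in> {1..int N} \<and> j \<in> {1..int p}}"
    by (rule finite_image_set2) auto
qed (use assms in blast)

lemma Linf2_nonneg: "N > 0 \<Longrightarrow> p > 0 \<Longrightarrow> Linf2 N p g \<ge> 0"
  using Linf2_ge[of 1 N 1 p g] by simp

lemma psi_increment_le:
  assumes N: "N > 0" and p: "p > 0"
    and per: "\<forall>i j. psi (i + int N) j = psi i j \<and> psi i (j + int p) = psi i j"
    and lip: "Linf2 N p (DX N psi) \<le> C'"
  shows "\<bar>psi (i + 1) j - psi i j\<bar> \<le> eps N * C'"
proof -
  define i' where "i' = 1 + (i - 1) mod int N"
  define j' where "j' = 1 + (j - 1) mod int p"
  have "0 \<le> (i - 1) mod int N" "(i - 1) mod int N < int N" using N by simp_all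
  then have i': "i' \<in> {1..int N}" unfolding i'_def atLeastAtMost_iff by linarith
  have "0 \<le> (j - 1) mod int p" "(j - 1) mod int p < int p" using p by simp_all
  then have j': "j' \<in> {1..int p}" unfolding j'_def atLeastAtMost_iff by linarith
  have "psi i' j' = psi i j"
    using periodic_mod[where g = "\<lambda>x. psi x j'" and q = N and r = 1 and x = i]
      periodic_mod[where g = "\<lambda>y. psi i y" and q = p and r = 1 and x = j] per
    unfolding i'_def j'_def by simp
  moreover have "psi (i' + 1) j' = psi (i + 1) j"
  proof -
    have "psi (x + int N + 1) j' = psi (x + 1) j'" for x
      using per by (metis add.commute add.left_commute)
    then show ?thesis
      using periodic_mod[where g = "\<lambda>x. psi (x + 1) j'" and q = N and r = 1 and x = i]
        periodic_mod[where g = "\<lambda>y. psi (i + 1) y" and q = p and r = 1 and x = j] per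
      unfolding i'_def j'_def by simp
  qed
  moreover have "\<bar>DX N psi i' j'\<bar> \<le> C'" using Linf2_ge[OF i' j', of "DX N psi"] lip by simp
  ultimately have "\<bar>psi (i + 1) j - psi i j\<bar> / eps N \<le> C'"
    unfolding DX_def using eps_pos[OF N] by simp
  then show ?thesis using eps_pos[OF N] by (simp add: field_simps)
qed

lemma inverse_diff_le:
  fixes x y c :: real
  assumes "c \<le> x" and "c \<le> y" and "c > 0"
  shows "\<bar>1 / x - 1 / y\<bar> \<le> \<bar>x - y\<bar> / c\<^sup>2"
proof -
  have "x > 0" "y > 0" using assms by linarith+
  then have "\<bar>1 / x - 1 / y\<bar> = \<bar>x - y\<bar> / (x * y)" by (simp add: field_simps abs_div)
  also have "\<dots> \<le> \<bar>x - y\<bar> / c\<^sup>2"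
    using assms by (intro divide_left_mono) (auto simp: power2_eq_square intro: mult_mono)
  finally show ?thesis .
qed

lemma lipschitz_of_increments:
  fixes a :: "int \<Rightarrow> real"
  assumes step: "\<And>i. \<bar>a (i + 1) - a i\<bar> \<le> D"
  shows "\<bar>a x - a y\<bar> \<le> D * \<bar>x - y\<bar>"
proof -
  have far: "\<bar>a (y + int n) - a y\<bar> \<le> D * real n" for y n
  proof (induction n)
    case (Suc n)
    have "a (y + int (Suc n)) = a (y + int n + 1)" by (simp add: algebra_simps)
    then have "\<bar>a (y + int (Suc n)) - a y\<bar> \<le> \<bar>a (y + int n + 1) - a (y + int n)\<bar> + \<bar>a (y + int n) - a y\<bar>"
      by linarith
    also have "\<dots> \<le> D + D * real n" using step Suc by (intro add_mono) auto
    finally show ?case by (simp add: algebra_simps)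
  qed simp
  show ?thesis
  proof (cases "y \<le> x")
    case True
    then show ?thesis using far[of y "nat (x - y)"] by simp
  next
    case False
    then show ?thesis using far[of x "nat (y - x)"] by (simp add: abs_minus_commute)
  qed
qed

text \<open>The factor \<open>C\<^sup>2 / c\<^sup>2\<close> comes from the two inversions in the harmonic mean.\<close>
lemma psi0_increment_le:
  assumes N: "N > 0" and p: "p > 0" and c: "c > 0" and bnd: "\<forall>i j. c \<le> psi i j \<and> psi i j \<le> C"
    and per: "\<forall>i j. psi (i + int N) j = psi i j \<and> psi i (j + int p) = psi i j"
    and lip: "Linf2 N p (DX N psi) \<le> C'"
  shows "\<bar>psi0 p psi (i + 1) - psi0 p psi i\<bar> \<le> eps N * (C' * C\<^sup>2 / c\<^sup>2)"
proof -
  have C: "C > 0" using bnd c by (meson order_less_le_trans)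
  define M where "M i = avgY p (\<lambda>i j. 1 / psi i j) i" for i
  have step: "\<bar>1 / psi (i + 1) j - 1 / psi i j\<bar> \<le> eps N * C' / c\<^sup>2" for j
  proof -
    have "\<bar>1 / psi (i + 1) j - 1 / psi i j\<bar> \<le> \<bar>psi (i + 1) j - psi i j\<bar> / c\<^sup>2"
      using bnd c by (intro inverse_diff_le) auto
    also have "\<dots> \<le> eps N * C' / c\<^sup>2"
      using psi_increment_le[OF N p per lip, of i j] by (intro divide_right_mono) auto
    finally show ?thesis .
  qed
  have "M (i + 1) - M i = (1 / real p) * (\<Sum>j\<in>{1..int p}. 1 / psi (i + 1) j - 1 / psi i j)"
    unfolding M_def avgY_def by (simp add: sum_subtractf right_diff_distrib)
  then have "\<bar>M (i + 1) - M i\<bar> = (1 / real p) * \<bar>\<Sum>j\<in>{1..int p}. 1 / psi (i + 1) j - 1 / psi i j\<bar>"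
    by (simp add: abs_mult)
  also have "\<dots> \<le> (1 / real p) * (\<Sum>j\<in>{1..int p}. eps N * C' / c\<^sup>2)"
    by (intro mult_left_mono order.trans[OF sum_abs] sum_mono step) auto
  also have "\<dots> = eps N * C' / c\<^sup>2" using p by simp
  finally have M_step: "\<bar>M (i + 1) - M i\<bar> \<le> eps N * C' / c\<^sup>2" .
  have M_lower: "1 / C \<le> M x" for x unfolding M_def using inverse_mean_bounds[OF p c bnd] by auto
  have "\<bar>psi0 p psi (i + 1) - psi0 p psi i\<bar> = \<bar>1 / M (i + 1) - 1 / M i\<bar>"
    unfolding psi0_def M_def by (simp add: inverse_eq_divide)
  also have "\<dots> \<le> \<bar>M (i + 1) - M i\<bar> / (1 / C)\<^sup>2"
    using M_lower C by (intro inverse_diff_le) auto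
  also have "\<dots> = C\<^sup>2 * \<bar>M (i + 1) - M i\<bar>" by (simp add: power_divide)
  also have "\<dots> \<le> C\<^sup>2 * (eps N * C' / c\<^sup>2)" using M_step by (intro mult_left_mono) auto
  finally show ?thesis by (simp add: algebra_simps)
qed

lemma psi0_lipschitz:
  assumes "N > 0" and "p > 0" and "c > 0" and "\<forall>i j. c \<le> psi i j \<and> psi i j \<le> C"
    and "\<forall>i j. psi (i + int N) j = psi i j \<and> psi i (j + int p) = psi i j"
    and "Linf2 N p (DX N psi) \<le> C'"
  shows "\<bar>psi0 p psi x - psi0 p psi y\<bar> \<le> eps N * (C' * C\<^sup>2 / c\<^sup>2) * \<bar>x - y\<bar>"
  by (rule lipschitz_of_increments[where a = "psi0 p psi", OF psi0_increment_le[OF assms]])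

section \<open>The discrete flux\<close>

text \<open>In one dimension the flux \<open>\<psi>\<^sup>0 Du\<close> of a solution of \<open>-(\<psi>\<^sup>0 u')' = F\<close> is an
  antiderivative of \<open>-F\<close>, determined up to a constant; \<open>flux_of N F \<sigma>\<close> records the
  antiderivative property on the nonnegative indices.\<close>
definition flux_of :: "nat \<Rightarrow> (int \<Rightarrow> real) \<Rightarrow> (int \<Rightarrow> real) \<Rightarrow> bool" where
  "flux_of N F \<sigma> \<longleftrightarrow> (\<forall>i j. 0 \<le> i \<longrightarrow> i \<le> j \<longrightarrow> \<sigma> j - \<sigma> i = - eps N * (\<Sum>l\<in>{i<..j}. F l))"

text \<open>Summation by parts; the boundary terms cancel by periodicity of \<open>v\<close> and of \<open>\<sigma>\<close>,
  the latter because \<open>F\<close> has mean zero.\<close>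
lemma flux_ipX_Dd:
  assumes flux: "flux_of N F \<sigma>" and N: "N > 0" and F0: "(\<Sum>i\<in>grid N. F i) = 0"
    and v: "v \<in> Uper N"
  shows "ipX N \<sigma> (Dd N v) = ipX N F v"
proof -
  have "v (1 + int N) = v (1 + int N - int N)" using v unfolding Uper_def by force
  then have v_per: "v (1 + int N) = v 1" by simp
  have "\<sigma> (int N) - \<sigma> 0 = - eps N * (\<Sum>l\<in>{0<..int N}. F l)"
    using flux unfolding flux_of_def by simp
  moreover have "{0<..int N} = grid N" by auto
  ultimately have \<sigma>_per: "\<sigma> (int N) = \<sigma> 0" using F0 by simp
  define T where "T i = \<sigma> (i - 1) * v i" for i
  have "(\<Sum>i\<in>grid N. T (i + 1) - T i) = T (1 + int N) - T 1"
    using sum_int_window_telescope[where v = T and r = 1 and q = N] unfolding grid_eq_window .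
  also have "\<dots> = 0" unfolding T_def using \<sigma>_per v_per by simp
  finally have tel: "(\<Sum>i\<in>grid N. T (i + 1) - T i) = 0" .
  have "T (i + 1) - T i = \<sigma> i * (v (i + 1) - v i) - eps N * F i * v i" if "i \<in> grid N" for i
  proof -
    have "\<sigma> i - \<sigma> (i - 1) = - eps N * (\<Sum>l\<in>{i - 1<..i}. F l)"
      using flux that unfolding flux_of_def by simp
    moreover have "{i - 1<..i} = {i}" by auto
    ultimately have "\<sigma> (i - 1) = \<sigma> i + eps N * F i" by simp
    then show ?thesis unfolding T_def by (simp add: algebra_simps)
  qed
  then have "(\<Sum>i\<in>grid N. \<sigma> i * (v (i + 1) - v i)) = eps N * (\<Sum>i\<in>grid N. F i * v i)"
    using tel by (simp add: sum_subtractf sum_distrib_left mult.assoc)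
  moreover have "ipX N \<sigma> (Dd N v) = (1 / real N) / eps N * (\<Sum>i\<in>grid N. \<sigma> i * (v (i + 1) - v i))"
    unfolding ipX_def Dd_def by (simp add: sum_divide_distrib[symmetric])
  ultimately show ?thesis using N unfolding ipX_def by (simp add: eps_def)
qed

lemma flux_exists:
  fixes F a :: "int \<Rightarrow> real"
  assumes N: "N > 0" and a_pos: "\<forall>i\<in>grid N. a i > 0" and F0: "(\<Sum>i\<in>grid N. F i) = 0"
  obtains \<sigma> where "flux_of N F \<sigma>"
    and "\<forall>v\<in>Uper N. ipX N \<sigma> (Dd N v) = ipX N F v"
    and "(\<Sum>i\<in>grid N. \<sigma> i / a i) = 0"
proof
  define s0 where "s0 i = - eps N * (\<Sum>l\<in>{1..i}. F l)" for i
  have Sa: "(\<Sum>i\<in>grid N. 1 / a i) > 0" using N a_pos by (intro sum_pos) auto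
  define \<sigma> where "\<sigma> i = s0 i - (\<Sum>i\<in>grid N. s0 i / a i) / (\<Sum>i\<in>grid N. 1 / a i)" for i
  show flux: "flux_of N F \<sigma>"
    unfolding flux_of_def
  proof (intro allI impI)
    fix i j :: int assume "0 \<le> i" "i \<le> j"
    then have "{1..j} = {1..i} \<union> {i<..j}" by auto
    then have "(\<Sum>l\<in>{1..j}. F l) = (\<Sum>l\<in>{1..i}. F l) + (\<Sum>l\<in>{i<..j}. F l)"
      by (simp, subst sum.union_disjoint) auto
    then show "\<sigma> j - \<sigma> i = - eps N * (\<Sum>l\<in>{i<..j}. F l)"
      unfolding \<sigma>_def s0_def by (simp add: algebra_simps)
  qed
  then show "\<forall>v\<in>Uper N. ipX N \<sigma> (Dd N v) = ipX N F v" using flux_ipX_Dd N F0 by blast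
  have "(\<Sum>i\<in>grid N. \<sigma> i / a i) = (\<Sum>i\<in>grid N. s0 i / a i)
      - (\<Sum>i\<in>grid N. s0 i / a i) / (\<Sum>i\<in>grid N. 1 / a i) * (\<Sum>i\<in>grid N. 1 / a i)"
    unfolding \<sigma>_def by (simp add: diff_divide_distrib sum_subtractf sum_distrib_left)
  then show "(\<Sum>i\<in>grid N. \<sigma> i / a i) = 0" using Sa by simp
qed

lemma flux_diff_le:
  assumes flux: "flux_of N F \<sigma>" and N: "N > 0"
    and ij: "0 \<le> i" "i \<le> j" and A: "{i<..j} \<subseteq> A" "finite A"
  shows "\<bar>\<sigma> j - \<sigma> i\<bar> \<le> eps N * (\<Sum>l\<in>A. \<bar>F l\<bar>)"
proof -
  have "\<bar>\<sigma> j - \<sigma> i\<bar> = eps N * \<bar>\<Sum>l\<in>{i<..j}. F l\<bar>"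
    using flux ij eps_pos[OF N] unfolding flux_of_def by (simp add: abs_mult)
  also have "\<dots> \<le> eps N * (\<Sum>l\<in>A. \<bar>F l\<bar>)"
    using eps_pos[OF N] A
    by (intro mult_left_mono order.trans[OF sum_abs] sum_mono2) auto
  finally show ?thesis .
qed

text \<open>The normalisation \<open>\<Sum> \<sigma>/a = 0\<close> forces \<open>\<sigma>\<close> to change sign on the grid, so its
  oscillation, at most \<open>\<epsilon> \<Sum>|F|\<close>, bounds it.\<close>
lemma flux_abs_le_L2:
  assumes flux: "flux_of N F \<sigma>" and N: "N > 0" and a_pos: "\<forall>i\<in>grid N. a i > 0"
    and zero: "(\<Sum>i\<in>grid N. \<sigma> i / a i) = 0" and i: "i \<in> grid N"
  shows "\<bar>\<sigma> i\<bar> \<le> L2 N F"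
proof -
  define B where "B = eps N * (\<Sum>l\<in>grid N. \<bar>F l\<bar>)"
  have B_le: "B \<le> L2 N F" unfolding B_def eps_def using mean_abs_le_L2[of N F] by simp
  have osc: "\<bar>\<sigma> y - \<sigma> x\<bar> \<le> B" if "x \<in> grid N" "y \<in> grid N" for x y
  proof (cases "x \<le> y")
    case True
    moreover have "{x<..y} \<subseteq> grid N" using that by auto
    ultimately show ?thesis unfolding B_def using flux_diff_le[OF flux N] that by simp
  next
    case False
    moreover have "{y<..x} \<subseteq> grid N" using that by auto
    ultimately show ?thesis
      unfolding B_def using flux_diff_le[OF flux N, of y x] that by (simp add: abs_minus_commute)
  qed
  obtain i1 where i1: "i1 \<in> grid N" "\<sigma> i1 \<ge> 0"
  proof (rule ccontr)
    assume "\<not> thesis"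
    then have "\<forall>x\<in>grid N. \<sigma> x < 0" using that by force
    then have "(\<Sum>x\<in>grid N. - (\<sigma> x / a x)) > 0" using N a_pos
      by (intro sum_pos) (auto simp: divide_neg_pos)
    then show False using zero by (simp add: sum_negf)
  qed
  obtain i2 where i2: "i2 \<in> grid N" "\<sigma> i2 \<le> 0"
  proof (rule ccontr)
    assume "\<not> thesis"
    then have "\<forall>x\<in>grid N. \<sigma> x > 0" using that by force
    then have "(\<Sum>x\<in>grid N. \<sigma> x / a x) > 0" using N a_pos by (intro sum_pos) auto
    then show False using zero by simp
  qed
  show ?thesis using osc[OF i2(1) i] osc[OF i1(1) i] i1(2) i2(2) B_le by linarith
qed

lemma flux_quotient_L2_le:
  assumes flux: "flux_of N F \<sigma>" and N: "N > 0" and c: "c > 0" and a_ge: "\<forall>i\<in>grid N. c \<le> a i"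
    and zero: "(\<Sum>i\<in>grid N. \<sigma> i / a i) = 0"
  shows "L2 N (\<lambda>i. \<sigma> i / a i) \<le> L2 N F / c"
proof (rule L2_le_const[OF N])
  fix i assume i: "i \<in> grid N"
  have a_pos: "\<forall>i\<in>grid N. a i > 0" using a_ge c by (meson order_less_le_trans)
  have "\<bar>\<sigma> i / a i\<bar> = \<bar>\<sigma> i\<bar> / a i" using a_pos i by (simp add: abs_div abs_of_pos)
  also have "\<dots> \<le> \<bar>\<sigma> i\<bar> / c" using a_ge a_pos c i by (intro divide_left_mono) auto
  also have "\<dots> \<le> L2 N F / c"
    using flux_abs_le_L2[OF flux N a_pos zero i] c by (intro divide_right_mono) auto
  finally show "\<bar>\<sigma> i / a i\<bar> \<le> L2 N F / c" .
qed

lemma gradient_eq_flux_quotient: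
  assumes N: "N > 0" and a_pos: "\<forall>i\<in>grid N. a i > 0" and u: "u \<in> Uper N"
    and u_eq: "\<forall>v\<in>Uper N. ipX N (\<lambda>i. a i * Dd N u i) (Dd N v) = ipX N F v"
    and \<sigma>_eq: "\<forall>v\<in>Uper N. ipX N \<sigma> (Dd N v) = ipX N F v"
    and zero: "(\<Sum>i\<in>grid N. \<sigma> i / a i) = 0"
    and i: "i \<in> grid N"
  shows "Dd N u i = \<sigma> i / a i"
proof -
  define d where "d i = Dd N u i - \<sigma> i / a i" for i
  have "(\<Sum>i\<in>grid N. d i) = 0" unfolding d_def using sum_grid_Dd[OF u] zero by (simp add: sum_subtractf)
  then obtain v where v: "v \<in> Usharp N" "\<forall>i\<in>grid N. Dd N v i = d i"
    using Usharp_antiderivative[OF N] by blast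
  have "v \<in> Uper N" using v(1) unfolding Usharp_def by simp
  then have "ipX N (\<lambda>i. a i * Dd N u i - \<sigma> i) (Dd N v) = 0"
    using u_eq \<sigma>_eq by (simp add: ipX_diff_left)
  moreover have "ipX N (\<lambda>i. a i * Dd N u i - \<sigma> i) (Dd N v) = ipX N (\<lambda>i. a i * d i) d"
  proof (intro ipX_cong)
    fix j assume j: "j \<in> grid N"
    then have "a j \<noteq> 0" using a_pos by force
    then show "a j * Dd N u j - \<sigma> j = a j * d j" unfolding d_def by (simp add: field_simps)
  qed (use v(2) in simp)
  ultimately have "(\<Sum>j\<in>grid N. a j * d j * d j) = 0"
    using N unfolding ipX_def by simp
  moreover have "\<forall>j\<in>grid N. a j * d j * d j \<ge> 0"
    using a_pos by (simp add: mult.assoc less_imp_le)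
  ultimately have "a i * d i * d i = 0"
    using i sum_nonneg_eq_0_iff[of "grid N" "\<lambda>j. a j * d j * d j"] by blast
  moreover have "a i > 0" using a_pos i by blast
  ultimately show ?thesis unfolding d_def by simp
qed

section \<open>Approximating the flux quotient by piecewise constants\<close>

definition approx_const :: "real \<Rightarrow> real \<Rightarrow> real" where
  "approx_const c L = 2 * sqrt (2 / c\<^sup>2 + 2 * L\<^sup>2 / c ^ 4)"

lemma approx_const_nonneg: "approx_const c L \<ge> 0"
  unfolding approx_const_def by simp

context mesh
begin

text \<open>On an element, \<open>\<sigma>\<close> varies by at most the local mass of \<open>F\<close> and, by the Lipschitz
  bound on \<open>a\<close>, \<open>1/a\<close> varies by \<open>O(H)\<close>.\<close>
lemma flux_quotient_elem_variation:
  fixes F \<sigma> a :: "int \<Rightarrow> real"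
  assumes flux: "flux_of N F \<sigma>" and c: "c > 0" and a_ge: "\<forall>i. c \<le> a i"
    and lip: "\<forall>x y. \<bar>a x - a y\<bar> \<le> eps N * L * \<bar>x - y\<bar>" and L: "L \<ge> 0"
    and zero: "(\<Sum>i\<in>grid N. \<sigma> i / a i) = 0"
    and k: "k \<in> {1..K}" and i: "i \<in> elem idx k"
  shows "\<bar>\<sigma> i / a i - \<sigma> (idx k) / a (idx k)\<bar>
    \<le> eps N * (\<Sum>l\<in>elem idx k. \<bar>F l\<bar>) / c + L2 N F * L * Hmax N K idx / c\<^sup>2"
proof -
  let ?m = "idx k"
  have a_pos: "\<forall>i. a i > 0" using a_ge c by (meson order_less_le_trans)
  have "?m \<in> elem idx k" using i by simp
  then have m_grid: "?m \<in> grid N" using elem_subset_grid[OF k] by blast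
  have "a i \<noteq> 0" "a ?m \<noteq> 0" using a_pos by (metis less_irrefl)+
  then have "\<sigma> i / a i - \<sigma> ?m / a ?m = (\<sigma> i - \<sigma> ?m) / a i + \<sigma> ?m * (1 / a i - 1 / a ?m)"
    by (simp add: field_simps)
  moreover have "\<bar>(\<sigma> i - \<sigma> ?m) / a i\<bar> \<le> eps N * (\<Sum>l\<in>elem idx k. \<bar>F l\<bar>) / c"
  proof -
    have "\<bar>(\<sigma> i - \<sigma> ?m) / a i\<bar> = \<bar>\<sigma> i - \<sigma> ?m\<bar> / a i" using a_pos by (simp add: abs_div abs_of_pos)
    also have "\<dots> \<le> \<bar>\<sigma> i - \<sigma> ?m\<bar> / c" using a_ge a_pos c by (intro divide_left_mono) auto
    also have "\<dots> \<le> eps N * (\<Sum>l\<in>elem idx k. \<bar>F l\<bar>) / c"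
      using flux_diff_le[OF flux N_pos, of ?m i "elem idx k"] m_grid i c
      by (intro divide_right_mono) (auto simp: subset_eq)
    finally show ?thesis .
  qed
  moreover have "\<bar>\<sigma> ?m * (1 / a i - 1 / a ?m)\<bar> \<le> L2 N F * L * Hmax N K idx / c\<^sup>2"
  proof -
    have "eps N * \<bar>i - ?m\<bar> \<le> Hk N idx k"
      unfolding Hk_def using i eps_pos[OF N_pos] by (intro mult_left_mono) auto
    then have "eps N * L * \<bar>i - ?m\<bar> \<le> L * Hmax N K idx"
      using Hk_le_Hmax[OF k] L by (metis mult.assoc mult.commute mult_left_mono order.trans)
    then have "\<bar>a i - a ?m\<bar> / c\<^sup>2 \<le> L * Hmax N K idx / c\<^sup>2"
      using lip order.trans by (intro divide_right_mono) (blast, simp)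
    then have "\<bar>1 / a i - 1 / a ?m\<bar> \<le> L * Hmax N K idx / c\<^sup>2"
      using inverse_diff_le[of c "a i" "a ?m"] a_ge c by simp
    moreover have "\<bar>\<sigma> ?m\<bar> \<le> L2 N F"
      using flux_abs_le_L2[OF flux N_pos _ zero m_grid] a_pos by simp
    ultimately have "\<bar>\<sigma> ?m\<bar> * \<bar>1 / a i - 1 / a ?m\<bar> \<le> L2 N F * (L * Hmax N K idx / c\<^sup>2)"
      by (intro mult_mono) (auto simp: L2_nonneg)
    then show ?thesis by (simp add: abs_mult)
  qed
  ultimately show ?thesis by (smt (verit) abs_triangle_ineq)
qed

text \<open>By Cauchy--Schwarz on each element, \<open>(\<epsilon> \<Sum>\<^sub>k |F|)\<^sup>2 \<le> H\<^sub>k \<epsilon> \<Sum>\<^sub>k F\<^sup>2\<close>.\<close>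
lemma ipX_le_of_elem_bounds:
  assumes \<alpha>: "\<alpha> \<ge> 0"
    and bound: "\<And>k i. k \<in> {1..K} \<Longrightarrow> i \<in> elem idx k
      \<Longrightarrow> \<bar>d i\<bar> \<le> \<alpha> * (eps N * (\<Sum>l\<in>elem idx k. \<bar>F l\<bar>)) + \<beta>"
  shows "ipX N d d \<le> 2 * \<alpha>\<^sup>2 * (Hmax N K idx)\<^sup>2 * (L2 N F)\<^sup>2 + 2 * \<beta>\<^sup>2"
proof -
  define H where "H = Hmax N K idx"
  define A where "A k = \<alpha> * (eps N * (\<Sum>l\<in>elem idx k. \<bar>F l\<bar>))" for k
  have sq: "d i * d i \<le> 2 * (A k)\<^sup>2 + 2 * \<beta>\<^sup>2" if "k \<in> {1..K}" "i \<in> elem idx k" for k i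
  proof -
    have "(d i)\<^sup>2 \<le> (A k + \<beta>)\<^sup>2"
      using bound[OF that] unfolding A_def by (metis abs_le_square_iff abs_ge_self order.trans)
    moreover have "(A k + \<beta>)\<^sup>2 \<le> 2 * (A k)\<^sup>2 + 2 * \<beta>\<^sup>2"
      using zero_le_power2[of "A k - \<beta>"] by (simp add: power2_eq_square algebra_simps)
    ultimately show ?thesis by (simp add: power2_eq_square)
  qed
  have local: "Hk N idx k * (A k)\<^sup>2 \<le> \<alpha>\<^sup>2 * H\<^sup>2 * (eps N * (\<Sum>l\<in>elem idx k. F l * F l))"
    if k: "k \<in> {1..K}" for k
  proof -
    define n where "n = real (card (elem idx k))"
    define s where "s = (\<Sum>l\<in>elem idx k. \<bar>F l\<bar>)"
    define S where "S = (\<Sum>l\<in>elem idx k. F l * F l)"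
    have Hk: "Hk N idx k = eps N * n" unfolding n_def using Hk_eq_sum[OF k] by simp
    have "s\<^sup>2 \<le> n * S"
      using sum_squared_le_sum_of_squares[of "\<lambda>l. \<bar>F l\<bar>" "elem idx k"]
      unfolding n_def s_def S_def by (simp add: power2_eq_square mult.commute)
    moreover have "0 \<le> \<alpha>\<^sup>2 * eps N ^ 3 * n" using eps_pos[OF N_pos] unfolding n_def by simp
    ultimately have "\<alpha>\<^sup>2 * eps N ^ 3 * n * s\<^sup>2 \<le> \<alpha>\<^sup>2 * eps N ^ 3 * n * (n * S)"
      by (rule mult_left_mono)
    then have "Hk N idx k * (A k)\<^sup>2 \<le> \<alpha>\<^sup>2 * (Hk N idx k)\<^sup>2 * (eps N * S)"
      unfolding A_def Hk s_def[symmetric] by (simp add: power2_eq_square power3_eq_cube algebra_simps)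
    also have "\<dots> \<le> \<alpha>\<^sup>2 * H\<^sup>2 * (eps N * S)"
    proof -
      have "0 \<le> eps N * S" using eps_pos[OF N_pos] unfolding S_def by (simp add: sum_nonneg)
      then show ?thesis using Hk_nonneg[OF k] Hk_le_Hmax[OF k] unfolding H_def
        by (intro mult_right_mono mult_left_mono power_mono) auto
    qed
    finally show ?thesis unfolding S_def .
  qed
  have "ipX N d d \<le> (1 / real N) * (\<Sum>k\<in>{1..K}. \<Sum>i\<in>elem idx k. 2 * (A k)\<^sup>2 + 2 * \<beta>\<^sup>2)"
    unfolding ipX_def sum_grid_split by (intro mult_left_mono sum_mono sq) auto
  also have "\<dots> = 2 * (\<Sum>k\<in>{1..K}. Hk N idx k * (A k)\<^sup>2) + 2 * \<beta>\<^sup>2 * (\<Sum>k\<in>{1..K}. Hk N idx k)"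
    unfolding sum_grid_elem_const by (simp add: algebra_simps sum.distrib sum_distrib_left)
  also have "\<dots> \<le> 2 * (\<Sum>k\<in>{1..K}. \<alpha>\<^sup>2 * H\<^sup>2 * (eps N * (\<Sum>l\<in>elem idx k. F l * F l))) + 2 * \<beta>\<^sup>2"
    unfolding sum_Hk using sum_mono[of "{1..K}", OF local] by simp
  also have "(\<Sum>k\<in>{1..K}. \<alpha>\<^sup>2 * H\<^sup>2 * (eps N * (\<Sum>l\<in>elem idx k. F l * F l))) = \<alpha>\<^sup>2 * H\<^sup>2 * (L2 N F)\<^sup>2"
    unfolding sum_distrib_left[symmetric] sum_grid_split[symmetric] L2_squared ipX_def eps_def ..
  finally show ?thesis unfolding H_def by simp
qed

lemma flux_quotient_nodal_error:
  fixes F \<sigma> a :: "int \<Rightarrow> real"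
  assumes flux: "flux_of N F \<sigma>" and c: "c > 0" and a_ge: "\<forall>i. c \<le> a i"
    and lip: "\<forall>x y. \<bar>a x - a y\<bar> \<le> eps N * L * \<bar>x - y\<bar>" and L: "L \<ge> 0"
    and zero: "(\<Sum>i\<in>grid N. \<sigma> i / a i) = 0"
  shows "L2 N (\<lambda>i. \<sigma> i / a i - pwconst K idx (\<lambda>k. \<sigma> (idx k) / a (idx k)) i)
    \<le> sqrt (2 / c\<^sup>2 + 2 * L\<^sup>2 / c ^ 4) * Hmax N K idx * L2 N F"
proof (rule L2_le_of_ipX_le)
  define H where "H = Hmax N K idx"
  define nF where "nF = L2 N F"
  define d where "d i = \<sigma> i / a i - pwconst K idx (\<lambda>k. \<sigma> (idx k) / a (idx k)) i" for i
  have "ipX N d d \<le> 2 * (1 / c)\<^sup>2 * H\<^sup>2 * nF\<^sup>2 + 2 * (nF * L * H / c\<^sup>2)\<^sup>2"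
    unfolding H_def nF_def
  proof (rule ipX_le_of_elem_bounds)
    fix k i assume "k \<in> {1..K}" "i \<in> elem idx k"
    then show "\<bar>d i\<bar> \<le> 1 / c * (eps N * (\<Sum>l\<in>elem idx k. \<bar>F l\<bar>)) + L2 N F * L * Hmax N K idx / c\<^sup>2"
      unfolding d_def using flux_quotient_elem_variation[OF flux c a_ge lip L zero]
      by (simp add: pwconst_eq)
  qed (use c in simp)
  also have "\<dots> = (sqrt (2 / c\<^sup>2 + 2 * L\<^sup>2 / c ^ 4) * H * nF)\<^sup>2"
    using c by (simp add: field_simps power_mult_distrib)
  finally show "ipX N d d \<le> (sqrt (2 / c\<^sup>2 + 2 * L\<^sup>2 / c ^ 4) * Hmax N K idx * L2 N F)\<^sup>2"
    unfolding H_def nF_def .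
qed (simp add: Hmax_nonneg L2_nonneg)

lemma pwlinear_approx_flux_quotient:
  fixes F \<sigma> a :: "int \<Rightarrow> real"
  assumes flux: "flux_of N F \<sigma>" and c: "c > 0" and a_ge: "\<forall>i. c \<le> a i"
    and lip: "\<forall>x y. \<bar>a x - a y\<bar> \<le> eps N * L * \<bar>x - y\<bar>" and L: "L \<ge> 0"
    and zero: "(\<Sum>i\<in>grid N. \<sigma> i / a i) = 0"
  obtains v where "v \<in> UHsharp N K idx"
    and "L2 N (\<lambda>i. \<sigma> i / a i - Dd N v i) \<le> approx_const c L * Hmax N K idx * L2 N F"
proof -
  define c0 where "c0 k = \<sigma> (idx k) / a (idx k)" for k
  define d where "d i = \<sigma> i / a i - pwconst K idx c0 i" for i
  have Ld: "L2 N d \<le> sqrt (2 / c\<^sup>2 + 2 * L\<^sup>2 / c ^ 4) * Hmax N K idx * L2 N F"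
    unfolding d_def c0_def by (rule flux_quotient_nodal_error[OF flux c a_ge lip L zero])
  text \<open>Subtracting the mean makes the piecewise constant the gradient of a periodic function.\<close>
  define t where "t = (1 / real N) * (\<Sum>i\<in>grid N. pwconst K idx c0 i)"
  have pw_shift: "pwconst K idx (\<lambda>k. c0 k - t) i = pwconst K idx c0 i - t" if "i \<in> grid N" for i
    unfolding pwconst_diff pwconst_const[OF that] ..
  have "(\<Sum>i\<in>grid N. pwconst K idx (\<lambda>k. c0 k - t) i) = (\<Sum>i\<in>grid N. pwconst K idx c0 i - t)"
    by (rule sum.cong[OF refl pw_shift])
  also have "\<dots> = 0" using N_pos by (simp add: t_def sum_subtractf)
  finally have "(\<Sum>i\<in>grid N. pwconst K idx (\<lambda>k. c0 k - t) i) = 0" .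
  then obtain v where v: "v \<in> UHsharp N K idx" "\<forall>i\<in>grid N. Dd N v i = pwconst K idx c0 i - t"
    using pwconst_antiderivative pw_shift by metis
  have "t = - ((1 / real N) * (\<Sum>i\<in>grid N. d i))"
    unfolding t_def d_def using zero by (simp add: sum_subtractf)
  then have "\<bar>t\<bar> \<le> (1 / real N) * (\<Sum>i\<in>grid N. \<bar>d i\<bar>)"
    by (simp add: abs_mult sum_abs divide_right_mono)
  also have "\<dots> \<le> L2 N d" by (rule mean_abs_le_L2)
  finally have t_le: "\<bar>t\<bar> \<le> L2 N d" .
  have "L2 N (\<lambda>i. \<sigma> i / a i - Dd N v i) = L2 N (\<lambda>i. d i + t)"
    by (intro L2_cong) (simp add: v(2) d_def)
  also have "\<dots> \<le> L2 N d + \<bar>t\<bar>" using L2_add_le[of N d "\<lambda>_. t"] L2_const[OF N_pos] by simp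
  also have "\<dots> \<le> approx_const c L * Hmax N K idx * L2 N F"
    using Ld t_le unfolding approx_const_def by simp
  finally show thesis using that v(1) by simp
qed

end

section \<open>Galerkin error estimates\<close>

lemma le_of_mult_square_le:
  fixes x B c :: real
  assumes "c > 0" "0 \<le> x" "0 \<le> B" "c * x\<^sup>2 \<le> B * x"
  shows "x \<le> B / c"
proof (cases "x = 0")
  case False
  then have "c * x \<le> B" using assms by (simp add: power2_eq_square)
  then show ?thesis using assms(1) by (simp add: field_simps)
qed (use assms in simp)

text \<open>Cea's lemma, perturbed by the error \<open>\<delta>\<close> in the coefficient.\<close>
lemma perturbed_galerkin_error:
  fixes a al \<sigma> u v0 :: "int \<Rightarrow> real"
  assumes N: "N > 0" and c: "c > 0" and al_bounds: "\<forall>i\<in>grid N. c \<le> al i \<and> al i \<le> C"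
    and close: "\<forall>i\<in>grid N. \<bar>al i - a i\<bar> \<le> \<delta>" and \<delta>: "\<delta> \<ge> 0"
    and a_nz: "\<forall>i\<in>grid N. a i \<noteq> 0"
    and u: "u \<in> UHsharp N K idx"
    and galerkin: "\<forall>v\<in>UHsharp N K idx. ipX N (\<lambda>i. al i * Dd N u i - \<sigma> i) (Dd N v) = 0"
    and v0: "v0 \<in> UHsharp N K idx" and approx: "L2 N (\<lambda>i. \<sigma> i / a i - Dd N v0 i) \<le> e"
    and G: "L2 N (\<lambda>i. \<sigma> i / a i) \<le> G"
  shows "L2 N (\<lambda>i. Dd N u i - \<sigma> i / a i) \<le> (\<delta> * G + C * e) / c + e"
proof -
  define g where "g i = \<sigma> i / a i" for i
  define d where "d = Dd N (\<lambda>i. u i - v0 i)"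
  have C: "C \<ge> c" using al_bounds N by force
  have e: "e \<ge> 0" and G0: "G \<ge> 0" using approx G L2_nonneg order_trans by blast+
  have "ipX N (\<lambda>i. al i * Dd N u i - \<sigma> i) d = 0"
    unfolding d_def using galerkin UHsharp_diff[OF u v0] by blast
  then have "ipX N (\<lambda>i. al i * d i) d
      = ipX N (\<lambda>i. al i * d i - (al i * Dd N u i - \<sigma> i)) d"
    by (simp add: ipX_diff_left)
  also have "\<dots> = ipX N (\<lambda>i. (a i - al i) * g i + al i * (g i - Dd N v0 i)) d"
    using a_nz unfolding d_def g_def Dd_diff by (intro ipX_cong refl) (simp add: field_simps)
  also have "\<dots> \<le> L2 N (\<lambda>i. (a i - al i) * g i + al i * (g i - Dd N v0 i)) * L2 N d"
    by (rule ipX_le_L2_mult)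
  also have "\<dots> \<le> (\<delta> * G + C * e) * L2 N d"
  proof (intro mult_right_mono L2_nonneg)
    have "L2 N (\<lambda>i. (a i - al i) * g i) \<le> \<delta> * L2 N g"
      using close \<delta> by (intro L2_mult_le) (auto simp: abs_minus_commute)
    moreover have "L2 N (\<lambda>i. al i * (g i - Dd N v0 i)) \<le> C * L2 N (\<lambda>i. g i - Dd N v0 i)"
    proof (intro L2_mult_le)
      fix i assume "i \<in> grid N"
      then show "\<bar>al i\<bar> \<le> C" using al_bounds c by force
    qed (use c C in simp)
    ultimately show "L2 N (\<lambda>i. (a i - al i) * g i + al i * (g i - Dd N v0 i)) \<le> \<delta> * G + C * e"
      using L2_add_le[of N "\<lambda>i. (a i - al i) * g i" "\<lambda>i. al i * (g i - Dd N v0 i)"]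
        mult_left_mono[OF G[folded g_def] \<delta>] mult_left_mono[OF approx[folded g_def], of C] C c
      by linarith
  qed
  finally have "c * (L2 N d)\<^sup>2 \<le> (\<delta> * G + C * e) * L2 N d"
    using ipX_weighted_ge[of N c al d] al_bounds unfolding L2_squared by simp
  then have Ld: "L2 N d \<le> (\<delta> * G + C * e) / c"
    using c C e G0 \<delta> by (intro le_of_mult_square_le) (auto simp: L2_nonneg)
  have "L2 N (\<lambda>i. Dd N u i - \<sigma> i / a i) = L2 N (\<lambda>i. d i - (g i - Dd N v0 i))"
    unfolding d_def g_def Dd_diff by (intro L2_cong) simp
  also have "\<dots> \<le> L2 N d + L2 N (\<lambda>i. g i - Dd N v0 i)" by (rule L2_diff_le)
  finally show ?thesis using Ld approx unfolding g_def by simp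
qed

context mesh
begin

lemma duality_L2_error:
  fixes a u uH :: "int \<Rightarrow> real"
  assumes c: "c > 0" and a_bounds: "\<forall>i. c \<le> a i \<and> a i \<le> C"
    and lip: "\<forall>x y. \<bar>a x - a y\<bar> \<le> eps N * L * \<bar>x - y\<bar>" and L: "L \<ge> 0"
    and u: "u \<in> Usharp N" and uH: "uH \<in> UHsharp N K idx"
    and orth: "\<forall>v\<in>UHsharp N K idx.
      ipX N (\<lambda>i. a i * Dd N u i) (Dd N v) = ipX N (\<lambda>i. a i * Dd N uH i) (Dd N v)"
    and grad: "L2 N (\<lambda>i. Dd N u i - Dd N uH i) \<le> Eg"
  shows "L2 N (\<lambda>i. u i - uH i) \<le> C * approx_const c L * Hmax N K idx * Eg"
proof -
  define C1 where "C1 = approx_const c L"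
  define H where "H = Hmax N K idx"
  define e where "e i = u i - uH i" for i
  have a_pos: "\<forall>i. a i > 0" using a_bounds c by (meson order_less_le_trans)
  have C: "C \<ge> c" using a_bounds by (meson order_trans)
  have Eg: "Eg \<ge> 0" using grad L2_nonneg order_trans by blast
  have e_per: "e \<in> Uper N"
    using u uH unfolding e_def UHsharp_def Usharp_def Uper_def by auto
  have "(\<Sum>i\<in>grid N. e i) = 0"
    using u uH N_pos unfolding e_def UHsharp_def Usharp_def avgX_def by (simp add: sum_subtractf)
  then obtain \<sigma> where flux: "flux_of N e \<sigma>" and \<sigma>_eq: "\<forall>v\<in>Uper N. ipX N \<sigma> (Dd N v) = ipX N e v"
    and zero: "(\<Sum>i\<in>grid N. \<sigma> i / a i) = 0"
    using flux_exists[OF N_pos] a_pos by metis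
  obtain v where v: "v \<in> UHsharp N K idx"
    and v_approx: "L2 N (\<lambda>i. \<sigma> i / a i - Dd N v i) \<le> C1 * H * L2 N e"
    using pwlinear_approx_flux_quotient[OF flux c _ lip L zero] a_bounds unfolding C1_def H_def by blast
  have "ipX N (\<lambda>i. a i * Dd N v i) (Dd N e) = 0"
  proof -
    have "ipX N (\<lambda>i. a i * Dd N e i) (Dd N v) = 0"
      using orth v unfolding e_def Dd_diff by (simp add: right_diff_distrib ipX_diff_left)
    then show ?thesis unfolding ipX_def by (simp add: ac_simps)
  qed
  then have "(L2 N e)\<^sup>2 = ipX N (\<lambda>i. a i * (\<sigma> i / a i - Dd N v i)) (Dd N e)"
    unfolding L2_squared using \<sigma>_eq e_per a_pos
    by (simp add: right_diff_distrib ipX_diff_left less_imp_neq[symmetric])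
  also have "\<dots> \<le> L2 N (\<lambda>i. a i * (\<sigma> i / a i - Dd N v i)) * L2 N (Dd N e)"
    by (rule ipX_le_L2_mult)
  also have "\<dots> \<le> (C * (C1 * H * L2 N e)) * Eg"
  proof (intro mult_mono)
    have "L2 N (\<lambda>i. a i * (\<sigma> i / a i - Dd N v i)) \<le> C * L2 N (\<lambda>i. \<sigma> i / a i - Dd N v i)"
      using a_bounds a_pos c C by (intro L2_mult_le) (auto simp: abs_of_pos)
    then show "L2 N (\<lambda>i. a i * (\<sigma> i / a i - Dd N v i)) \<le> C * (C1 * H * L2 N e)"
      using v_approx c C by (meson mult_left_mono order.trans less_le_trans less_imp_le)
    show "L2 N (Dd N e) \<le> Eg" using grad unfolding e_def Dd_diff .
    show "0 \<le> C * (C1 * H * L2 N e)"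
      using c C Hmax_nonneg L2_nonneg approx_const_nonneg unfolding C1_def H_def by simp
  qed (rule L2_nonneg)
  finally have "1 * (L2 N e)\<^sup>2 \<le> (C * C1 * H * Eg) * L2 N e" by (simp add: ac_simps)
  then show ?thesis
    using le_of_mult_square_le[of 1 "L2 N e"] c C Eg Hmax_nonneg L2_nonneg approx_const_nonneg
    unfolding C1_def H_def e_def by simp
qed

end

section \<open>The cell problems and the HQC bilinear form\<close>

lemma Upsharp_antiderivative:
  assumes p: "p > 0" and N: "N > 0" and g0: "(\<Sum>i\<in>{r..<r + int p}. g i) = 0"
  obtains s where "s \<in> Upsharp p" and "\<forall>i\<in>{r..<r + int p}. Dd N s i = g i"
proof -
  obtain v0 where per: "\<forall>i. v0 (i + int p) = v0 i"
    and inc: "\<forall>i\<in>{r..<r + int p}. v0 (i + 1) - v0 i = eps N * g i"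
    using periodic_antiderivative[where q = p and r = r and g = g and e = "eps N"] p g0 by metis
  define s where "s i = v0 i - (1 / real p) * (\<Sum>i\<in>{1..int p}. v0 i)" for i
  have "s \<in> Upsharp p"
    unfolding Upsharp_def using per p by (simp add: s_def sum_subtractf)
  moreover have "\<forall>i\<in>{r..<r + int p}. Dd N s i = g i"
    using inc eps_pos[OF N] unfolding Dd_def s_def by simp
  ultimately show thesis by (rule that)
qed

lemma Upsharp_eq_of_Dd_eq:
  assumes p: "p > 0" and N: "N > 0" and w1: "w1 \<in> Upsharp p" and w2: "w2 \<in> Upsharp p"
    and D: "\<forall>i\<in>{r..<r + int p}. Dd N w1 i = Dd N w2 i"
  shows "w1 = w2"
proof -
  define d where "d i = w1 i - w2 i" for i
  have d_per: "\<forall>i. d (i + int p) = d i" using w1 w2 unfolding d_def Upsharp_def by auto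
  have d_step: "d (i + 1) = d i" if "i \<in> {r..<r + int p}" for i
  proof -
    have "(w1 (i + 1) - w1 i) / eps N = (w2 (i + 1) - w2 i) / eps N"
      using D that unfolding Dd_def by blast
    then show ?thesis using eps_pos[OF N] unfolding d_def by simp
  qed
  have d_window: "d (r + int n) = d r" if "n \<le> p" for n
    using that
  proof (induction n)
    case (Suc n)
    then have "r + int n \<in> {r..<r + int p}" by auto
    then show ?case using d_step[of "r + int n"] Suc by (simp add: ac_simps)
  qed simp
  have d_const: "d i = d r" for i
  proof -
    have "0 \<le> (i - r) mod int p" "(i - r) mod int p < int p" using p by simp_all
    then have "d (r + (i - r) mod int p) = d r"
      using d_window[of "nat ((i - r) mod int p)"] by simp
    then show ?thesis using periodic_mod[OF d_per, of r i] by simp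
  qed
  have "(\<Sum>i\<in>{1..int p}. d i) = 0" using w1 w2 unfolding d_def Upsharp_def by (simp add: sum_subtractf)
  moreover have "(\<Sum>i\<in>{1..int p}. d i) = (\<Sum>i\<in>{1..int p}. d r)"
    using d_const by (intro sum.cong) auto
  ultimately have "real p * d r = 0" by simp
  then have "d r = 0" using p by simp
  show ?thesis
  proof
    fix i
    have "d i = 0" using d_const[of i] \<open>d r = 0\<close> by simp
    then show "w1 i = w2 i" unfolding d_def by simp
  qed
qed

definition is_cell_solution ::
    "nat \<Rightarrow> nat \<Rightarrow> int \<Rightarrow> (int \<Rightarrow> real) \<Rightarrow> (int \<Rightarrow> real) \<Rightarrow> (int \<Rightarrow> real) \<Rightarrow> bool" where
  "is_cell_solution N p r psc l w \<longleftrightarrow> w \<in> Upsharp p \<and>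
     (\<forall>s\<in>Upsharp p. ipRep p r (\<lambda>i. psc i * Dd N (\<lambda>j. l j + w j) i) (Dd N s) = 0)"

text \<open>The value \<open>\<beta>\<close> of the constant cell flux is forced by \<open>\<Sum> Dw = 0\<close> over the
  periodic window.\<close>
lemma cell_solution_iff_const_flux:
  fixes psc l w :: "int \<Rightarrow> real" and r :: int
  assumes p: "p > 0" and N: "N > 0" and pos: "\<forall>i. psc i > 0" and slope: "\<forall>i. Dd N l i = b"
  defines "\<beta> \<equiv> b * real p / (\<Sum>i\<in>{r..<r + int p}. 1 / psc i)"
  shows "is_cell_solution N p r psc l w \<longleftrightarrow>
    w \<in> Upsharp p \<and> (\<forall>i\<in>{r..<r + int p}. psc i * Dd N (\<lambda>j. l j + w j) i = \<beta>)"
proof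
  let ?W = "{r..<r + int p}"
  have Dl: "Dd N (\<lambda>j. l j + w j) i = b + Dd N w i" for i using slope Dd_add by simp
  have Spos: "(\<Sum>i\<in>?W. 1 / psc i) > 0" using p pos by (intro sum_pos) auto
  assume sol: "is_cell_solution N p r psc l w"
  then have w: "w \<in> Upsharp p" unfolding is_cell_solution_def by simp
  define h where "h i = psc i * (b + Dd N w i)" for i
  define \<mu> where "\<mu> = (1 / real p) * (\<Sum>i\<in>?W. h i)"
  define g where "g i = h i - \<mu>" for i
  have g0: "(\<Sum>i\<in>?W. g i) = 0" unfolding g_def \<mu>_def using p by (simp add: sum_subtractf)
  text \<open>Testing with an \<open>s\<close> whose gradient is the fluctuation of the flux shows that the
    fluctuation vanishes.\<close>
  obtain s where s: "s \<in> Upsharp p" "\<forall>i\<in>?W. Dd N s i = g i"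
    using Upsharp_antiderivative[OF p N g0] by blast
  have "0 = ipRep p r (\<lambda>i. psc i * Dd N (\<lambda>j. l j + w j) i) (Dd N s)"
    using sol s(1) unfolding is_cell_solution_def by simp
  also have "\<dots> = (1 / real p) * (\<Sum>i\<in>?W. h i * g i)"
    unfolding ipRep_def using s(2) by (simp add: Dl h_def)
  finally have "(1 / real p) * (\<Sum>i\<in>?W. h i * g i) = 0" ..
  then have "(\<Sum>i\<in>?W. h i * g i) = 0" using p by simp
  moreover have "(\<Sum>i\<in>?W. h i * g i) = (\<Sum>i\<in>?W. g i * g i) + \<mu> * (\<Sum>i\<in>?W. g i)"
    unfolding sum_distrib_left sum.distrib[symmetric] by (intro sum.cong) (simp_all add: g_def algebra_simps)
  ultimately have "(\<Sum>i\<in>?W. g i * g i) = 0" using g0 by simp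
  then have h_const: "\<forall>i\<in>?W. h i = \<mu>" unfolding g_def by (subst (asm) sum_nonneg_eq_0_iff) auto
  have "(\<Sum>i\<in>?W. Dd N w i) = 0" using w sum_Dd_periodic unfolding Upsharp_def by blast
  moreover have "Dd N w i = \<mu> / psc i - b" if "i \<in> ?W" for i
    using h_const that pos unfolding h_def by (metis add_diff_cancel_left' less_irrefl nonzero_mult_div_cancel_left)
  ultimately have "(\<Sum>i\<in>?W. \<mu> / psc i - b) = 0" by simp
  then have "\<mu> * (\<Sum>i\<in>?W. 1 / psc i) = b * real p" by (simp add: sum_subtractf sum_distrib_left)
  then have "\<mu> = \<beta>" unfolding \<beta>_def using Spos by (simp add: field_simps)
  then show "w \<in> Upsharp p \<and> (\<forall>i\<in>?W. psc i * Dd N (\<lambda>j. l j + w j) i = \<beta>)"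
    using w h_const unfolding h_def Dl by simp
next
  let ?W = "{r..<r + int p}"
  assume const: "w \<in> Upsharp p \<and> (\<forall>i\<in>?W. psc i * Dd N (\<lambda>j. l j + w j) i = \<beta>)"
  have "ipRep p r (\<lambda>i. psc i * Dd N (\<lambda>j. l j + w j) i) (Dd N s) = 0" if "s \<in> Upsharp p" for s
  proof -
    have "ipRep p r (\<lambda>i. psc i * Dd N (\<lambda>j. l j + w j) i) (Dd N s) = (1 / real p) * \<beta> * (\<Sum>i\<in>?W. Dd N s i)"
      unfolding ipRep_def using const by (simp add: sum_distrib_left)
    also have "(\<Sum>i\<in>?W. Dd N s i) = 0" using that sum_Dd_periodic unfolding Upsharp_def by blast
    finally show ?thesis by simp
  qed
  then show "is_cell_solution N p r psc l w" using const unfolding is_cell_solution_def by blast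
qed

lemma cell_solution_exists_unique:
  fixes psc l :: "int \<Rightarrow> real"
  assumes p: "p > 0" and N: "N > 0" and pos: "\<forall>i. psc i > 0" and slope: "\<forall>i. Dd N l i = b"
  shows "\<exists>!w. is_cell_solution N p r psc l w"
proof (rule ex_ex1I)
  let ?W = "{r..<r + int p}"
  define \<beta> where "\<beta> = b * real p / (\<Sum>i\<in>?W. 1 / psc i)"
  have Spos: "(\<Sum>i\<in>?W. 1 / psc i) > 0" using p pos by (intro sum_pos) auto
  have Dl: "Dd N (\<lambda>j. l j + w j) i = b + Dd N w i" for w i using slope Dd_add by simp
  note iff = cell_solution_iff_const_flux[OF p N pos slope, of r, folded \<beta>_def]
  have "(\<Sum>i\<in>?W. \<beta> / psc i - b) = \<beta> * (\<Sum>i\<in>?W. 1 / psc i) - b * real p"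
    by (simp add: sum_subtractf sum_distrib_left)
  also have "\<dots> = 0" unfolding \<beta>_def using Spos by simp
  finally have "(\<Sum>i\<in>?W. \<beta> / psc i - b) = 0" .
  then obtain w where w: "w \<in> Upsharp p" "\<forall>i\<in>?W. Dd N w i = \<beta> / psc i - b"
    using Upsharp_antiderivative[OF p N] by blast
  have "\<forall>i\<in>?W. psc i * Dd N (\<lambda>j. l j + w j) i = \<beta>"
    using w(2) pos by (simp add: Dl less_imp_neq[symmetric])
  then show "\<exists>w. is_cell_solution N p r psc l w" using iff w(1) by blast
  fix w1 w2 assume "is_cell_solution N p r psc l w1" "is_cell_solution N p r psc l w2"
  then have "w1 \<in> Upsharp p" "w2 \<in> Upsharp p"
    and "\<forall>i\<in>?W. psc i * (b + Dd N w1 i) = psc i * (b + Dd N w2 i)"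
    using iff by (auto simp: Dl)
  moreover from this(3) have "\<forall>i\<in>?W. Dd N w1 i = Dd N w2 i" using pos by (simp add: less_imp_neq[symmetric])
  ultimately show "w1 = w2" by (intro Upsharp_eq_of_Dd_eq[OF p N]) auto
qed

lemma ell_slope:
  assumes N: "N > 0" and v: "v \<in> UHper N K idx" and k: "k \<in> {1..K}" and step: "idx k < idx (Suc k)"
  shows "Dd N (ell N idx k v) i = slope N idx v k"
proof -
  have "is_affine_on N v {idx k..idx (Suc k)}" using v k unfolding UHper_def by simp
  then obtain a b where ab: "\<forall>i\<in>{idx k..idx (Suc k)}. v i = a + b * Xpt N i"
    by (rule is_affine_onE)
  have ep: "eps N > 0" by (rule eps_pos[OF N])
  have "ell N idx k v = (\<lambda>i. a + b * Xpt N i)"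
    unfolding ell_def
  proof (rule the_equality)
    fix l assume l: "(\<exists>a' b'. \<forall>i. l i = a' + b' * Xpt N i) \<and> (\<forall>i\<in>{idx k..idx (Suc k)}. l i = v i)"
    then obtain a' b' where l_aff: "\<forall>i. l i = a' + b' * Xpt N i" by blast
    have "idx k \<in> {idx k..idx (Suc k)}" "idx k + 1 \<in> {idx k..idx (Suc k)}" using step by auto
    then have "a' + b' * Xpt N (idx k) = a + b * Xpt N (idx k)"
      and "a' + b' * Xpt N (idx k + 1) = a + b * Xpt N (idx k + 1)"
      using l l_aff ab by metis+
    moreover have "(a' + b' * Xpt N (x + 1)) - (a' + b' * Xpt N x) = b' * eps N" for a' b' x
      unfolding Xpt_def by (simp add: algebra_simps)
    ultimately have "b' * eps N = b * eps N" by metis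
    then have "b' = b" using ep by simp
    moreover from this have "a' = a"
      using \<open>a' + b' * Xpt N (idx k) = a + b * Xpt N (idx k)\<close> by simp
    ultimately
    show "l = (\<lambda>i. a + b * Xpt N i)" using l_aff by auto
  qed (use ab in auto)
  moreover have "slope N idx v k = b"
  proof -
    have "v (idx k + 1) = a + b * Xpt N (idx k + 1)" "v (idx k) = a + b * Xpt N (idx k)"
      using ab step by auto
    then show ?thesis unfolding slope_def Dd_def Xpt_def using ep by (simp add: algebra_simps)
  qed
  ultimately show ?thesis unfolding Dd_def Xpt_def using ep by (simp add: algebra_simps)
qed

context mesh
begin

lemma pwconst_mult:
  "i \<in> grid N \<Longrightarrow> pwconst K idx (\<lambda>k. A k * B k) i = pwconst K idx A i * pwconst K idx B i"
  by (elim grid_covered) (simp add: pwconst_eq)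

lemma BHQC_elem:
  assumes p: "p > 0" and c: "c > 0" and bnd: "\<forall>i j. c \<le> psi i j \<and> psi i j \<le> C"
    and per: "\<forall>i j. psi i (j + int p) = psi i j"
    and u: "u \<in> UHper N K idx" and v: "v \<in> UHper N K idx" and k: "k \<in> {1..K}"
  shows "ipRep p (rep k) (\<lambda>i. psi_coll psi coll k i * Dd N (Rk N p psi idx rep coll k u) i)
      (Dd N (Rk N p psi idx rep coll k v))
    = psi0 p psi (coll k) * slope N idx u k * slope N idx v k"
proof -
  let ?psc = "psi_coll psi coll k"
  let ?W = "{rep k..<rep k + int p}"
  let ?cell = "\<lambda>x. cellw N p psi idx rep coll k x"
  have pos: "\<forall>i. ?psc i > 0" unfolding psi_coll_def using bnd c by (meson order_less_le_trans)
  have ell: "\<forall>i. Dd N (ell N idx k x) i = slope N idx x k" if "x \<in> UHper N K idx" for x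
    using ell_slope[OF N_pos that k idx_less_Suc[OF k]] by blast
  have sol: "is_cell_solution N p (rep k) ?psc (ell N idx k x) (?cell x)" if "x \<in> UHper N K idx" for x
    using theI'[OF cell_solution_exists_unique[OF p N_pos pos ell[OF that]]]
    unfolding cellw_def is_cell_solution_def .
  define \<beta> where "\<beta> = (\<Sum>i\<in>?W. 1 / ?psc i)"
  have flux_u: "\<forall>i\<in>?W. ?psc i * Dd N (Rk N p psi idx rep coll k u) i = slope N idx u k * real p / \<beta>"
    using sol[OF u] cell_solution_iff_const_flux[OF p N_pos pos ell[OF u]]
    unfolding Rk_def \<beta>_def by blast
  have w_per: "\<forall>i. ?cell v (i + int p) = ?cell v i"
    using sol[OF v] unfolding is_cell_solution_def Upsharp_def by blast
  have "ipRep p (rep k) (\<lambda>i. ?psc i * Dd N (Rk N p psi idx rep coll k u) i) (Dd N (Rk N p psi idx rep coll k v))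
      = (1 / real p) * (slope N idx u k * real p / \<beta>) * (\<Sum>i\<in>?W. slope N idx v k + Dd N (?cell v) i)"
    unfolding ipRep_def using flux_u by (simp add: sum_distrib_left Rk_def Dd_add ell[OF v])
  also have "(\<Sum>i\<in>?W. slope N idx v k + Dd N (?cell v) i) = real p * slope N idx v k"
    using sum_Dd_periodic[OF w_per] by (simp add: sum.distrib)
  also have "\<beta> = (\<Sum>j\<in>{1..int p}. 1 / psi (coll k) j)"
    unfolding \<beta>_def psi_coll_def grid_eq_window[symmetric]
    by (rule sum_int_window_periodic) (use per in simp)
  finally show ?thesis using p unfolding psi0_def avgY_def by (simp add: field_simps)
qed

lemma BHQC_eq_collocated_form:
  assumes p: "p > 0" and c: "c > 0" and bnd: "\<forall>i j. c \<le> psi i j \<and> psi i j \<le> C"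
    and per: "\<forall>i j. psi i (j + int p) = psi i j"
    and u: "u \<in> UHper N K idx" and v: "v \<in> UHper N K idx"
  shows "BHQC N p psi K idx rep coll u v
    = ipX N (\<lambda>i. pwconst K idx (\<lambda>k. psi0 p psi (coll k)) i * Dd N u i) (Dd N v)"
proof -
  have "BHQC N p psi K idx rep coll u v
      = (\<Sum>k\<in>{1..K}. Hk N idx k * (psi0 p psi (coll k) * slope N idx u k * slope N idx v k))"
    unfolding BHQC_def by (intro sum.cong refl) (simp add: BHQC_elem[OF p c bnd per u v])
  also have "\<dots> = ipX N (pwconst K idx (\<lambda>k. psi0 p psi (coll k) * slope N idx u k))
      (pwconst K idx (slope N idx v))"
    by (simp add: ipX_pwconst)
  also have "\<dots> = ipX N (\<lambda>i. pwconst K idx (\<lambda>k. psi0 p psi (coll k)) i * Dd N u i) (Dd N v)"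
    by (intro ipX_cong) (simp_all add: pwconst_mult Dd_UHper_eq_pwconst u v)
  finally show ?thesis .
qed

lemma collocated_coeff_close:
  fixes a :: "int \<Rightarrow> real"
  assumes lip: "\<forall>x y. \<bar>a x - a y\<bar> \<le> eps N * L * \<bar>x - y\<bar>" and L: "L \<ge> 0"
    and coll: "\<forall>k\<in>{1..K}. coll k \<in> elem idx k" and i: "i \<in> grid N"
  shows "\<bar>pwconst K idx (\<lambda>k. a (coll k)) i - a i\<bar> \<le> L * Hmax N K idx"
proof -
  obtain k where k: "k \<in> {1..K}" "i \<in> elem idx k" using grid_covered[OF i] .
  have "coll k \<in> elem idx k" using coll k by blast
  then have "\<bar>coll k - i\<bar> \<le> idx (Suc k) - idx k" using k by auto
  then have "eps N * \<bar>coll k - i\<bar> \<le> Hk N idx k"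
    unfolding Hk_def using eps_pos[OF N_pos] by (intro mult_left_mono) simp_all
  then have "eps N * L * \<bar>coll k - i\<bar> \<le> L * Hmax N K idx"
    using Hk_le_Hmax[OF k(1)] L by (metis mult.assoc mult.commute mult_left_mono order.trans)
  then show ?thesis using lip pwconst_eq[OF k] by (metis order.trans)
qed

end

section \<open>The error estimates\<close>

definition gradient_error_const :: "real \<Rightarrow> real \<Rightarrow> real \<Rightarrow> real" where
  "gradient_error_const c C L = (L / c + C * approx_const c L) / c + approx_const c L"

context mesh
begin

lemma flux_galerkin_error:
  fixes a al \<sigma> F u :: "int \<Rightarrow> real"
  assumes c: "c > 0" and a_bounds: "\<forall>i. c \<le> a i \<and> a i \<le> C"
    and lip: "\<forall>x y. \<bar>a x - a y\<bar> \<le> eps N * L * \<bar>x - y\<bar>" and L: "L \<ge> 0"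
    and flux: "flux_of N F \<sigma>" and zero: "(\<Sum>i\<in>grid N. \<sigma> i / a i) = 0"
    and al_bounds: "\<forall>i\<in>grid N. c \<le> al i \<and> al i \<le> C"
    and close: "\<forall>i\<in>grid N. \<bar>al i - a i\<bar> \<le> L * Hmax N K idx"
    and u: "u \<in> UHsharp N K idx"
    and galerkin: "\<forall>v\<in>UHsharp N K idx. ipX N (\<lambda>i. al i * Dd N u i - \<sigma> i) (Dd N v) = 0"
  shows "L2 N (\<lambda>i. Dd N u i - \<sigma> i / a i) \<le> gradient_error_const c C L * Hmax N K idx * L2 N F"
proof -
  obtain v0 where v0: "v0 \<in> UHsharp N K idx"
    and approx: "L2 N (\<lambda>i. \<sigma> i / a i - Dd N v0 i) \<le> approx_const c L * Hmax N K idx * L2 N F"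
    using pwlinear_approx_flux_quotient[OF flux c _ lip L zero] a_bounds by blast
  have G: "L2 N (\<lambda>i. \<sigma> i / a i) \<le> L2 N F / c"
    using flux_quotient_L2_le[OF flux N_pos c _ zero] a_bounds by blast
  have a_nz: "\<forall>i\<in>grid N. a i \<noteq> 0" using a_bounds c by (metis less_le_trans less_irrefl)
  have "L2 N (\<lambda>i. Dd N u i - \<sigma> i / a i)
      \<le> (L * Hmax N K idx * (L2 N F / c) + C * (approx_const c L * Hmax N K idx * L2 N F)) / c
        + approx_const c L * Hmax N K idx * L2 N F"
    using perturbed_galerkin_error[OF N_pos c al_bounds close _ a_nz u galerkin v0 approx G]
      L Hmax_nonneg by simp
  also have "\<dots> = gradient_error_const c C L * Hmax N K idx * L2 N F"
    unfolding gradient_error_const_def using c by (simp add: field_simps)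
  finally show ?thesis .
qed

lemma hqc_gradient_errors:
  fixes psi :: "int \<Rightarrow> int \<Rightarrow> real" and f u0 uH uHt :: "int \<Rightarrow> real"
  assumes p: "p > 0" and c: "0 < c"
    and per: "\<forall>i j. psi (i + int N) j = psi i j \<and> psi i (j + int p) = psi i j"
    and bnd: "\<forall>i j. c \<le> psi i j \<and> psi i j \<le> C"
    and lin: "Linf2 N p (DX N psi) \<le> C'"
    and f0: "avgX N f = 0"
    and sampling: "valid_sampling p K idx rep coll"
    and u0: "u0 \<in> Usharp N"
    and u0_eq: "\<forall>v\<in>Uper N. ipX N (\<lambda>i. psi0 p psi i * Dd N u0 i) (Dd N v) = ipX N f v"
    and uH: "uH \<in> UHsharp N K idx"
    and uH_eq: "\<forall>v\<in>UHsharp N K idx. BHQC N p psi K idx rep coll uH v = ipX N f v"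
    and uHt: "uHt \<in> UHsharp N K idx"
    and uHt_eq: "\<forall>v\<in>UHsharp N K idx. ipX N (\<lambda>i. psi0 p psi i * Dd N uHt i) (Dd N v) = ipX N f v"
  obtains \<sigma> where "\<forall>i\<in>grid N. Dd N u0 i = \<sigma> i / psi0 p psi i"
    and "L2 N (\<lambda>i. Dd N uH i - \<sigma> i / psi0 p psi i)
      \<le> gradient_error_const c C (C' * C\<^sup>2 / c\<^sup>2) * Hmax N K idx * L2 N f"
    and "L2 N (\<lambda>i. Dd N uHt i - \<sigma> i / psi0 p psi i)
      \<le> gradient_error_const c C (C' * C\<^sup>2 / c\<^sup>2) * Hmax N K idx * L2 N f"
proof -
  define a where "a = psi0 p psi"
  define L where "L = C' * C\<^sup>2 / c\<^sup>2"
  have a_bounds: "\<forall>i. c \<le> a i \<and> a i \<le> C" unfolding a_def using psi0_bounds[OF p c bnd] by blast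
  have a_pos: "\<forall>i. a i > 0" using a_bounds c by (meson order_less_le_trans)
  have L: "L \<ge> 0" unfolding L_def using Linf2_nonneg[OF N_pos p, of "DX N psi"] lin by simp
  have lip: "\<forall>x y. \<bar>a x - a y\<bar> \<le> eps N * L * \<bar>x - y\<bar>"
    unfolding a_def L_def using psi0_lipschitz[OF N_pos p c bnd per lin] by blast
  have UHsharp_sub: "v \<in> Uper N" "v \<in> UHper N K idx" if "v \<in> UHsharp N K idx" for v
    using that unfolding UHsharp_def Usharp_def by auto
  have "(\<Sum>i\<in>grid N. f i) = 0" using f0 N_pos unfolding avgX_def by simp
  then obtain \<sigma> where flux: "flux_of N f \<sigma>" and \<sigma>_eq: "\<forall>v\<in>Uper N. ipX N \<sigma> (Dd N v) = ipX N f v"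
    and zero: "(\<Sum>i\<in>grid N. \<sigma> i / a i) = 0"
    using flux_exists[OF N_pos] a_pos by metis
  note error = flux_galerkin_error[OF c a_bounds lip L flux zero]
  have "\<forall>i\<in>grid N. Dd N u0 i = \<sigma> i / a i"
    using gradient_eq_flux_quotient[OF N_pos _ _ u0_eq[folded a_def] \<sigma>_eq zero] a_pos u0
    unfolding Usharp_def by blast
  moreover have "L2 N (\<lambda>i. Dd N uH i - \<sigma> i / a i) \<le> gradient_error_const c C L * Hmax N K idx * L2 N f"
  proof (rule error[where al = "pwconst K idx (\<lambda>k. a (coll k))", OF _ _ uH])
    have "\<forall>k\<in>{1..K}. coll k \<in> elem idx k" using sampling unfolding valid_sampling_def by force
    then show "\<forall>i\<in>grid N. \<bar>pwconst K idx (\<lambda>k. a (coll k)) i - a i\<bar> \<le> L * Hmax N K idx"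
      using collocated_coeff_close[OF lip L] by blast
    show "\<forall>i\<in>grid N. c \<le> pwconst K idx (\<lambda>k. a (coll k)) i \<and> pwconst K idx (\<lambda>k. a (coll k)) i \<le> C"
      by (metis grid_covered pwconst_eq a_bounds)
    show "\<forall>v\<in>UHsharp N K idx. ipX N (\<lambda>i. pwconst K idx (\<lambda>k. a (coll k)) i * Dd N uH i - \<sigma> i) (Dd N v) = 0"
      using uH_eq \<sigma>_eq BHQC_eq_collocated_form[OF p c bnd _ UHsharp_sub(2)[OF uH] UHsharp_sub(2)]
        UHsharp_sub(1) per
      unfolding a_def by (simp add: ipX_diff_left)
  qed
  moreover have "L2 N (\<lambda>i. Dd N uHt i - \<sigma> i / a i) \<le> gradient_error_const c C L * Hmax N K idx * L2 N f"
  proof (rule error[where al = a, OF _ _ uHt])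
    show "\<forall>v\<in>UHsharp N K idx. ipX N (\<lambda>i. a i * Dd N uHt i - \<sigma> i) (Dd N v) = 0"
      using uHt_eq \<sigma>_eq UHsharp_sub(1) unfolding a_def by (simp add: ipX_diff_left)
  qed (use a_bounds L Hmax_nonneg in simp_all)
  ultimately show thesis using that unfolding a_def L_def by blast
qed

lemma hqc_error_estimates:
  fixes psi :: "int \<Rightarrow> int \<Rightarrow> real" and f u0 uH uHt :: "int \<Rightarrow> real"
  assumes p: "p > 0" and c: "0 < c"
    and per: "\<forall>i j. psi (i + int N) j = psi i j \<and> psi i (j + int p) = psi i j"
    and bnd: "\<forall>i j. c \<le> psi i j \<and> psi i j \<le> C"
    and lin: "Linf2 N p (DX N psi) \<le> C'"
    and f0: "avgX N f = 0"
    and sampling: "valid_sampling p K idx rep coll"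
    and u0: "u0 \<in> Usharp N"
    and u0_eq: "\<forall>v\<in>Uper N. ipX N (\<lambda>i. psi0 p psi i * Dd N u0 i) (Dd N v) = ipX N f v"
    and uH: "uH \<in> UHsharp N K idx"
    and uH_eq: "\<forall>v\<in>UHsharp N K idx. BHQC N p psi K idx rep coll uH v = ipX N f v"
    and uHt: "uHt \<in> UHsharp N K idx"
    and uHt_eq: "\<forall>v\<in>UHsharp N K idx. ipX N (\<lambda>i. psi0 p psi i * Dd N uHt i) (Dd N v) = ipX N f v"
  shows "H1semi N (\<lambda>i. uH i - u0 i)
      \<le> gradient_error_const c C (C' * C\<^sup>2 / c\<^sup>2) * Hmax N K idx * L2 N f"
    and "L2 N (\<lambda>i. uH i - u0 i)
      \<le> C * approx_const c (C' * C\<^sup>2 / c\<^sup>2) * gradient_error_const c C (C' * C\<^sup>2 / c\<^sup>2)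
          * (Hmax N K idx)\<^sup>2 * L2 N f + L2 N (\<lambda>i. uH i - uHt i)"
proof -
  define a where "a = psi0 p psi"
  define L where "L = C' * C\<^sup>2 / c\<^sup>2"
  define E where "E = gradient_error_const c C L * Hmax N K idx * L2 N f"
  obtain \<sigma> where Du0: "\<forall>i\<in>grid N. Dd N u0 i = \<sigma> i / a i"
    and EH: "L2 N (\<lambda>i. Dd N uH i - \<sigma> i / a i) \<le> E"
    and EHt: "L2 N (\<lambda>i. Dd N uHt i - \<sigma> i / a i) \<le> E"
    using hqc_gradient_errors[OF assms] unfolding a_def L_def E_def by blast
  show "H1semi N (\<lambda>i. uH i - u0 i) \<le> gradient_error_const c C (C' * C\<^sup>2 / c\<^sup>2) * Hmax N K idx * L2 N f"
    using EH Du0 unfolding H1semi_def E_def L_def Dd_diff by (subst L2_cong) simp_all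
  have a_bounds: "\<forall>i. c \<le> a i \<and> a i \<le> C" unfolding a_def using psi0_bounds[OF p c bnd] by blast
  have L: "L \<ge> 0" unfolding L_def using Linf2_nonneg[OF N_pos p, of "DX N psi"] lin by simp
  have lip: "\<forall>x y. \<bar>a x - a y\<bar> \<le> eps N * L * \<bar>x - y\<bar>"
    unfolding a_def L_def using psi0_lipschitz[OF N_pos p c bnd per lin] by blast
  have "L2 N (\<lambda>i. u0 i - uHt i) \<le> C * approx_const c L * Hmax N K idx * E"
  proof (rule duality_L2_error[OF c a_bounds lip L u0 uHt])
    show "\<forall>v\<in>UHsharp N K idx. ipX N (\<lambda>i. a i * Dd N u0 i) (Dd N v) = ipX N (\<lambda>i. a i * Dd N uHt i) (Dd N v)"
      using u0_eq uHt_eq unfolding a_def UHsharp_def Usharp_def by simp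
    show "L2 N (\<lambda>i. Dd N u0 i - Dd N uHt i) \<le> E"
      using EHt Du0 L2_diff_commute[of N "\<lambda>i. Dd N uHt i" "\<lambda>i. \<sigma> i / a i"]
      by (subst L2_cong[where u' = "\<lambda>i. \<sigma> i / a i - Dd N uHt i"]) simp_all
  qed
  then show "L2 N (\<lambda>i. uH i - u0 i)
      \<le> C * approx_const c (C' * C\<^sup>2 / c\<^sup>2) * gradient_error_const c C (C' * C\<^sup>2 / c\<^sup>2)
          * (Hmax N K idx)\<^sup>2 * L2 N f + L2 N (\<lambda>i. uH i - uHt i)"
    using L2_diff_le[of N "\<lambda>i. uH i - uHt i" "\<lambda>i. u0 i - uHt i"]
    unfolding E_def L_def by (simp add: power2_eq_square ac_simps)
qed

end

theorem theorem6p1: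
  fixes p :: nat and c_psi C_psi C'_psi :: real
  assumes "p > 0" and "0 < c_psi"
  shows "\<exists>C4 C5 :: real. \<forall>(N::nat) (psi::int \<Rightarrow> int \<Rightarrow> real) (f::int \<Rightarrow> real) (K::nat)
           (idx::nat \<Rightarrow> int) (rep::nat \<Rightarrow> int) (coll::nat \<Rightarrow> int)
           (u0::int \<Rightarrow> real) (uH::int \<Rightarrow> real) (uHt::int \<Rightarrow> real).
      N > 0
      \<and> (\<forall>i j. psi (i + int N) j = psi i j \<and> psi i (j + int p) = psi i j)
      \<and> (\<forall>i j. c_psi \<le> psi i j \<and> psi i j \<le> C_psi)
      \<and> Linf2 N p (DX N psi) \<le> C'_psi
      \<and> f \<in> Uper N \<and> avgX N f = 0
      \<and> valid_mesh N K idx \<and> valid_sampling p K idx rep coll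
      \<and> u0 \<in> Usharp N
      \<and> (\<forall>v\<in>Uper N. ipX N (\<lambda>i. psi0 p psi i * Dd N u0 i) (Dd N v) = ipX N f v)
      \<and> uH \<in> UHsharp N K idx
      \<and> (\<forall>v\<in>UHsharp N K idx. BHQC N p psi K idx rep coll uH v = ipX N f v)
      \<and> uHt \<in> UHsharp N K idx
      \<and> (\<forall>v\<in>UHsharp N K idx. ipX N (\<lambda>i. psi0 p psi i * Dd N uHt i) (Dd N v) = ipX N f v)
      \<longrightarrow> H1semi N (\<lambda>i. uH i - u0 i) \<le> C4 * Hmax N K idx * L2 N f
        \<and> L2 N (\<lambda>i. uH i - u0 i) \<le> C5 * (Hmax N K idx)^2 * L2 N f + L2 N (\<lambda>i. uH i - uHt i)"
  apply (intro exI allI impI conjI; elim conjE)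
   apply (rule mesh.hqc_error_estimates(1)[OF mesh.intro assms]; assumption)
  apply (rule mesh.hqc_error_estimates(2)[OF mesh.intro assms]; assumption)
  done

end
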